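(* (1) Let $\mathcal C$ and $\mathcal D$ be connected $\Delta$-complexes labeled over a common $B(X,P)$ and let $f\colon\mathcal D\to\mathcal C$ be an immersion commuting with the labelings. If $v\in\mathcal D^{(0)}$ and $u=f(v)$, then $L(\mathcal D,v)\subseteq L(\mathcal C,u)$, and $L(\mathcal D,v)$ is a closed inverse submonoid of $L(\mathcal C,u)$. (2) Conversely, let $\mathcal C$ be a connected $\Delta$-complex labeled over $B(X,P)$, let $u\in\mathcal C^{(0)}$ and let $H$ be a closed inverse submonoid of $M(X,P)$ with $H\subseteq L(\mathcal C,u)$. Then there exist a connected $\Delta$-complex $\mathcal D_H$ labeled over $B(X,P)$, an immersion $f_H\colon\mathcal D_H\to\mathcal C$ commuting with the labelings, and a $0$-cell $v\in\mathcal D_H$ with $f_H(v)=u$ and $L(\mathcal D_H,v)=H$; moreover $(\mathcal D_H,f_H,v)$ is unique up to isomorphism (a label-preserving cellular homeomorphism commuting with characteristic maps, with the immersions and preserving the base vertex). (3) If $H,K$ are closed inverse submonoids of $M(X,P)$ with $H,K\subseteq L(\mathcal C,u)$, then there is a homeomorphism $h\colon\mathcal D_H\to\mathcal D_K$ carrying cells to cells, commuting with the distinguished characteristic maps and with $f_K\circ h=f_H$ (not required to preserve base vertices) if and only if $H$ and $K$ are conjugate in $L(\mathcal C,u)$.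
   Context: A $\Delta$-complex is a CW-complex in which each $k$-cell $c$ has a distinguished characteristic map $\sigma_c\colon\Delta^k\to\mathcal C$, $\Delta^k=[v_0,\dots,v_k]$ the standard simplex with ordered vertices, such that the restriction of $\sigma_c$ to each $(k-1)$-face (identified order-preservingly with $\Delta^{k-1}$) is the distinguished characteristic map of a $(k-1)$-cell. The root of $c$ is $\sigma_c(v_0)$; a $1$-cell $e$ is directed from $\sigma_e(v_0)$ to $\sigma_e(v_1)$. All complexes are finite-dimensional; $\mathcal C^{(0)}$ denotes the set of $0$-cells. An immersion is a continuous map $f$ that is a local homeomorphism onto its image and commutes with characteristic maps: each $k$-cell $d$ maps onto a $k$-cell and $f\circ\sigma_d=\sigma_{f(d)}$. $B(X,P)$ is a $\Delta$-complex with one $0$-cell, $1$-cells indexed by $X$, $k$-cells ($2\le k\le n$) indexed by $P_k$, index sets pairwise disjoint, $P=\bigcup P_k$. A complex $\mathcal C$ is labeled over $B(X,P)$ via an immersion $f_{\mathcal C}\colon\mathcal C\to B(X,P)$, and $\ell(c)$ is the index of $f_{\mathcal C}(c)$; an immersion $g\colon\mathcal D\to\mathcal C$ commutes with the labelings if $f_{\mathcal C}\circ g=f_{\mathcal D}$. Boundary labels: for a $k$-cell $c$ ($k\ge2$) with characteristic map $\sigma$, let $c_i$ be the $(k-1)$-cell whose characteristic map is $\sigma$ restricted to the face omitting $v_i$, and $e(c)=\sigma([v_0,v_1])$; $bl(c)=\ell(\sigma[v_0,v_1])\ell(\sigma[v_1,v_2])\ell(\sigma[v_0,v_2])^{-1}$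 if $k=2$, $bl(c)=\ell(c_k)\cdots\ell(c_1)\ell(e(c))\ell(c_0)\ell(e(c))^{-1}$ if $k\ge3$; $bl(\rho)$ is the boundary label of the cell of $B(X,P)$ labeled $\rho$. $M(X,P)$ is the inverse monoid presented by generators $X\cup P$ and relations $\rho^2=\rho$, $\rho=\rho\,bl(\rho)$ for $\rho\in P$. $M(X,P)$ acts on the right by partial injections on $\mathcal C^{(0)}$: $v\cdot x=w$ iff there is a $1$-cell labeled $x\in X$ from $v$ to $w$; $v\cdot x^{-1}=w$ iff there is one from $w$ to $v$; $v\cdot\rho=v$ iff $v$ is the root of a cell labeled $\rho\in P$ (undefined otherwise); this extends to a well-defined action of $M(X,P)$. The loop monoid is $L(\mathcal C,v)=\{m\in M(X,P): v\cdot m=v\}$. Natural partial order: $a\le b$ iff $a=eb$ for an idempotent $e$. For $N\subseteq M$, $N^\omega=\{m: m\ge n\text{ for some }n\in N\}$; $N$ is closed if $N=N^\omega$. Two closed inverse submonoids $H,K$ are conjugate in $L$ if there is $m\in L$ with $mHm^{-1}\subseteq K$ and $m^{-1}Km\subseteq H$. *)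

theory Defs
  imports Main
begin

text \<open>A Delta-complex is encoded by its cells of each dimension together with the face
operators: dface i c is the (k-1)-cell whose characteristic map is the restriction of the
characteristic map of the k-cell c to the face omitting v_i.\<close>

record 'c dcx =
  dcells :: "nat \<Rightarrow> 'c set"
  dface :: "nat \<Rightarrow> 'c \<Rightarrow> 'c"

definition dcomplex :: "'c dcx \<Rightarrow> bool" where
  "dcomplex C \<longleftrightarrow>
     (\<forall>k j. k \<noteq> j \<longrightarrow> dcells C k \<inter> dcells C j = {}) \<and>
     (\<forall>k c i. 1 \<le> k \<longrightarrow> c \<in> dcells C k \<longrightarrow> i \<le> k \<longrightarrow> dface C i c \<in> dcells C (k - 1)) \<and>
     (\<forall>k c i j. 2 \<le> k \<longrightarrow> c \<in> dcells C k \<longrightarrow> i < j \<longrightarrow> j \<le> k \<longrightarrow>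
         dface C i (dface C j c) = dface C (j - 1) (dface C i c)) \<and>
     (\<exists>n. \<forall>k>n. dcells C k = {})"

definition allcells :: "'c dcx \<Rightarrow> 'c set" where
  "allcells C = (\<Union>k. dcells C k)"

text \<open>vert C k j c: the 0-cell which is the image of vertex v_j of the k-cell c.\<close>
fun vert :: "'c dcx \<Rightarrow> nat \<Rightarrow> nat \<Rightarrow> 'c \<Rightarrow> 'c" where
  "vert C 0 j c = c"
| "vert C (Suc k) j c =
     (if j < Suc k then vert C k j (dface C (Suc k) c) else vert C k (j - 1) (dface C 0 c))"

definition root :: "'c dcx \<Rightarrow> nat \<Rightarrow> 'c \<Rightarrow> 'c" where
  "root C k c = vert C k 0 c"

text \<open>e(c) = sigma([v_0,v_1]) for a k-cell c (k >= 1).\<close>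
fun edge01 :: "'c dcx \<Rightarrow> nat \<Rightarrow> 'c \<Rightarrow> 'c" where
  "edge01 C k c = (if k \<le> 1 then c else edge01 C (k - 1) (dface C k c))"

text \<open>Connectedness (of the realization) = connectedness of the 1-skeleton.\<close>
definition dconnected :: "'c dcx \<Rightarrow> bool" where
  "dconnected C \<longleftrightarrow>
     (\<forall>u\<in>dcells C 0. \<forall>w\<in>dcells C 0.
        (\<lambda>a b. \<exists>e\<in>dcells C 1. (dface C 1 e = a \<and> dface C 0 e = b) \<or>
                               (dface C 1 e = b \<and> dface C 0 e = a))\<^sup>*\<^sup>* u w)"

text \<open>Immersion: cellular map sending k-cells onto k-cells, commuting with characteristic
maps (i.e. with face operators), and locally injective (injective on the open star of
every vertex).\<close>
definition immersion :: "'c dcx \<Rightarrow> 'd dcx \<Rightarrow> ('c \<Rightarrow> 'd) \<Rightarrow> bool" where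
  "immersion C D f \<longleftrightarrow>
     (\<forall>k. \<forall>c\<in>dcells C k. f c \<in> dcells D k) \<and>
     (\<forall>k. \<forall>c\<in>dcells C k. \<forall>i\<le>k. 1 \<le> k \<longrightarrow> f (dface C i c) = dface D i (f c)) \<and>
     (\<forall>k. \<forall>c1\<in>dcells C k. \<forall>c2\<in>dcells C k. \<forall>j\<le>k.
         vert C k j c1 = vert C k j c2 \<longrightarrow> f c1 = f c2 \<longrightarrow> c1 = c2)"

text \<open>Isomorphism of Delta-complexes: a cellular homeomorphism commuting with the
distinguished characteristic maps.\<close>
definition dc_iso :: "'c dcx \<Rightarrow> 'd dcx \<Rightarrow> ('c \<Rightarrow> 'd) \<Rightarrow> bool" where
  "dc_iso C D h \<longleftrightarrow> bij_betw h (allcells C) (allcells D) \<and>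
     (\<forall>k. \<forall>c\<in>dcells C k. h c \<in> dcells D k) \<and>
     (\<forall>k. \<forall>c\<in>dcells C k. \<forall>i\<le>k. 1 \<le> k \<longrightarrow> h (dface C i c) = dface D i (h c))"

text \<open>B(X,P) is a Delta-complex with exactly one 0-cell; its 1-cells are X and its k-cells
(k >= 2) are P_k; the cells of B are their own indices.\<close>
definition is_base :: "'l dcx \<Rightarrow> bool" where
  "is_base B \<longleftrightarrow> dcomplex B \<and> (\<exists>z. dcells B 0 = {z})"

definition Xset :: "'l dcx \<Rightarrow> 'l set" where
  "Xset B = dcells B 1"

definition Pset :: "'l dcx \<Rightarrow> 'l set" where
  "Pset B = (\<Union>k\<in>{2..}. dcells B k)"

definition labeled :: "'l dcx \<Rightarrow> 'c dcx \<Rightarrow> ('c \<Rightarrow> 'l) \<Rightarrow> bool" where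
  "labeled B C lab \<longleftrightarrow> dcomplex C \<and> immersion C B lab"

definition lab_immersion :: "'d dcx \<Rightarrow> ('d \<Rightarrow> 'l) \<Rightarrow> 'c dcx \<Rightarrow> ('c \<Rightarrow> 'l) \<Rightarrow> ('d \<Rightarrow> 'c) \<Rightarrow> bool" where
  "lab_immersion D labD C labC f \<longleftrightarrow> immersion D C f \<and>
     (\<forall>k. \<forall>d\<in>dcells D k. labC (f d) = labD d)"

text \<open>Words over X \<union> P and formal inverses; (a, True) stands for a^{-1}.\<close>
type_synonym 'l word = "('l \<times> bool) list"

definition words :: "'l dcx \<Rightarrow> 'l word set" where
  "words B = lists ((Xset B \<union> Pset B) \<times> UNIV)"

definition winv :: "'l word \<Rightarrow> 'l word" where
  "winv w = rev (map (\<lambda>(a, b). (a, \<not> b)) w)"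

definition bl :: "'l dcx \<Rightarrow> 'l \<Rightarrow> 'l word" where
  "bl B \<rho> = (let k = (THE k. \<rho> \<in> dcells B k) in
     if k = 2 then [(dface B 2 \<rho>, False), (dface B 0 \<rho>, False), (dface B 1 \<rho>, True)]
     else map (\<lambda>i. (dface B i \<rho>, False)) (rev [1..<Suc k]) @
          [(edge01 B k \<rho>, False), (dface B 0 \<rho>, False), (edge01 B k \<rho>, True)])"

text \<open>The congruence on words presenting M(X,P) as an inverse monoid: the Wagner
congruence (free inverse monoid) together with the relations rho^2 = rho and
rho = rho bl(rho).\<close>
inductive mcong :: "'l dcx \<Rightarrow> 'l word \<Rightarrow> 'l word \<Rightarrow> bool" for B where
  refl: "w \<in> words B \<Longrightarrow> mcong B w w"
| sym: "mcong B u v \<Longrightarrow> mcong B v u"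
| trans: "mcong B u v \<Longrightarrow> mcong B v w \<Longrightarrow> mcong B u w"
| cong: "mcong B u u' \<Longrightarrow> mcong B v v' \<Longrightarrow> mcong B (u @ v) (u' @ v')"
| inv1: "w \<in> words B \<Longrightarrow> mcong B (w @ winv w @ w) w"
| inv2: "u \<in> words B \<Longrightarrow> w \<in> words B \<Longrightarrow>
           mcong B (u @ winv u @ w @ winv w) (w @ winv w @ u @ winv u)"
| idem: "\<rho> \<in> Pset B \<Longrightarrow> mcong B [(\<rho>, False), (\<rho>, False)] [(\<rho>, False)]"
| rel: "\<rho> \<in> Pset B \<Longrightarrow> mcong B [(\<rho>, False)] ((\<rho>, False) # bl B \<rho>)"

definition Mrel :: "'l dcx \<Rightarrow> ('l word \<times> 'l word) set" where
  "Mrel B = {(u, v). mcong B u v}"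

definition Mcar :: "'l dcx \<Rightarrow> 'l word set set" where
  "Mcar B = words B // Mrel B"

definition mmul :: "'l dcx \<Rightarrow> 'l word set \<Rightarrow> 'l word set \<Rightarrow> 'l word set" where
  "mmul B m n = (\<Union>u\<in>m. \<Union>v\<in>n. Mrel B `` {u @ v})"

definition mone :: "'l dcx \<Rightarrow> 'l word set" where
  "mone B = Mrel B `` {[]}"

definition minv :: "'l dcx \<Rightarrow> 'l word set \<Rightarrow> 'l word set" where
  "minv B m = (\<Union>u\<in>m. Mrel B `` {winv u})"

definition midem :: "'l dcx \<Rightarrow> 'l word set \<Rightarrow> bool" where
  "midem B e \<longleftrightarrow> e \<in> Mcar B \<and> mmul B e e = e"

definition mleq :: "'l dcx \<Rightarrow> 'l word set \<Rightarrow> 'l word set \<Rightarrow> bool" where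
  "mleq B a b \<longleftrightarrow> a \<in> Mcar B \<and> b \<in> Mcar B \<and> (\<exists>e. midem B e \<and> a = mmul B e b)"

definition inv_submonoid :: "'l dcx \<Rightarrow> 'l word set set \<Rightarrow> 'l word set set \<Rightarrow> bool" where
  "inv_submonoid B S N \<longleftrightarrow> N \<subseteq> S \<and> mone B \<in> N \<and>
     (\<forall>a\<in>N. \<forall>b\<in>N. mmul B a b \<in> N) \<and> (\<forall>a\<in>N. minv B a \<in> N)"

text \<open>Closed inverse submonoid N of S: N = N^omega (upward closure taken inside S).\<close>
definition closed_inv_submonoid :: "'l dcx \<Rightarrow> 'l word set set \<Rightarrow> 'l word set set \<Rightarrow> bool" where
  "closed_inv_submonoid B S N \<longleftrightarrow> inv_submonoid B S N \<and>
     {m \<in> S. \<exists>n\<in>N. mleq B n m} = N"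

definition conjugate :: "'l dcx \<Rightarrow> 'l word set set \<Rightarrow> 'l word set set \<Rightarrow> 'l word set set \<Rightarrow> bool" where
  "conjugate B L H K \<longleftrightarrow> (\<exists>m\<in>L.
     (\<forall>h\<in>H. mmul B (mmul B m h) (minv B m) \<in> K) \<and>
     (\<forall>k\<in>K. mmul B (mmul B (minv B m) k) m \<in> H))"

definition step :: "'l dcx \<Rightarrow> 'c dcx \<Rightarrow> ('c \<Rightarrow> 'l) \<Rightarrow> 'c \<Rightarrow> 'l \<times> bool \<Rightarrow> 'c option" where
  "step B C lab v x = (case x of (a, isinv) \<Rightarrow>
     if a \<in> Xset B then
       (if \<not> isinv then
          (if (\<exists>!e. e \<in> dcells C 1 \<and> lab e = a \<and> dface C 1 e = v)
           then Some (dface C 0 (THE e. e \<in> dcells C 1 \<and> lab e = a \<and> dface C 1 e = v))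
           else None)
        else
          (if (\<exists>!e. e \<in> dcells C 1 \<and> lab e = a \<and> dface C 0 e = v)
           then Some (dface C 1 (THE e. e \<in> dcells C 1 \<and> lab e = a \<and> dface C 0 e = v))
           else None))
     else if a \<in> Pset B then
       (if (\<exists>k c. c \<in> dcells C k \<and> lab c = a \<and> root C k c = v) then Some v else None)
     else None)"

definition act :: "'l dcx \<Rightarrow> 'c dcx \<Rightarrow> ('c \<Rightarrow> 'l) \<Rightarrow> 'c \<Rightarrow> 'l word \<Rightarrow> 'c option" where
  "act B C lab v w = fold (\<lambda>x ov. Option.bind ov (\<lambda>v'. step B C lab v' x)) w (Some v)"

definition loopmon :: "'l dcx \<Rightarrow> 'c dcx \<Rightarrow> ('c \<Rightarrow> 'l) \<Rightarrow> 'c \<Rightarrow> 'l word set set" where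
  "loopmon B C lab v = {m \<in> Mcar B. \<exists>w\<in>m. act B C lab v w = Some v}"

definition realizes :: "'l dcx \<Rightarrow> 'c dcx \<Rightarrow> ('c \<Rightarrow> 'l) \<Rightarrow> 'c \<Rightarrow> 'l word set set \<Rightarrow>
    'd dcx \<Rightarrow> ('d \<Rightarrow> 'l) \<Rightarrow> ('d \<Rightarrow> 'c) \<Rightarrow> 'd \<Rightarrow> bool" where
  "realizes B C labC u H D labD f v \<longleftrightarrow>
     labeled B D labD \<and> dconnected D \<and> lab_immersion D labD C labC f \<and>
     v \<in> dcells D 0 \<and> f v = u \<and> loopmon B D labD v = H"

end

theory Submission
  imports Defs
begin

text \<open>
  Words over X \<union> P act on the 0-cells of a labeled complex by following edges and staying at roots
  of higher cells; the defining relations of M(X,P) hold for this action, so M(X,P) acts and loop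
  monoids are well defined. An immersion carries the action along, and a word e m with e
  idempotent fixes a vertex only if m does, which gives (1). For (2), the complex D_H has as
  cells the pairs (c, [p]) where p is a word read from u to the root of c that is admissible
  for H, and [p] is its class modulo p \<sim> q \<Longleftrightarrow> p q\<inverse> \<in> H; the relation \<rho> = \<rho> bl(\<rho>) guarantees
  that faces of cells are cells. Any realization is isomorphic to D_H by matching vertices that
  are reached by the same word, and conjugating by a loop p moves the base vertex of a
  realization of K to a vertex whose loop monoid is p\<inverse> K p, which gives (3).
\<close>

lemma dcells_disjoint: "dcomplex C \<Longrightarrow> c \<in> dcells C k \<Longrightarrow> c \<in> dcells C j \<Longrightarrow> k = j"
  unfolding dcomplex_def by blast

lemma dface_in_dcells:
  "dcomplex C \<Longrightarrow> 1 \<le> k \<Longrightarrow> c \<in> dcells C k \<Longrightarrow> i \<le> k \<Longrightarrow> dface C i c \<in> dcells C (k - 1)"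
  unfolding dcomplex_def by blast

lemma dface_dface:
  "dcomplex C \<Longrightarrow> 2 \<le> k \<Longrightarrow> c \<in> dcells C k \<Longrightarrow> i < j \<Longrightarrow> j \<le> k \<Longrightarrow>
     dface C i (dface C j c) = dface C (j - 1) (dface C i c)"
  unfolding dcomplex_def by blast

lemma vert_Suc_dface:
  assumes C: "dcomplex C"
  shows "c \<in> dcells C (Suc n) \<Longrightarrow> i \<le> Suc n \<Longrightarrow> j \<le> n \<Longrightarrow>
     vert C n j (dface C i c) = vert C (Suc n) (if j < i then j else Suc j) c"
proof (induction n arbitrary: c i j)
  case 0
  then show ?case by (cases i) auto
next
  case (Suc m)
  have top: "dface C (Suc (Suc m)) c \<in> dcells C (Suc m)" and zero: "dface C 0 c \<in> dcells C (Suc m)"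
    using dface_in_dcells[OF C _ Suc.prems(1)] by auto
  consider "i = Suc (Suc m)" | "i \<le> Suc m" "j < Suc m" | "j = Suc m" "i = 0"
    | "i \<le> Suc m" "j = Suc m" "0 < i"
    using Suc.prems by linarith
  then show ?case
  proof cases
    case 1
    then show ?thesis using Suc.prems by simp
  next
    case 2
    have "dface C i (dface C (Suc (Suc m)) c) = dface C (Suc m) (dface C i c)"
      using dface_dface[OF C _ Suc.prems(1), of i "Suc (Suc m)"] 2 by simp
    then show ?thesis using Suc.IH[OF top, of i j] 2 by auto
  next
    case 3
    then show ?thesis by simp
  next
    case 4
    have "dface C 0 (dface C i c) = dface C (i - 1) (dface C 0 c)"
      using dface_dface[OF C _ Suc.prems(1), of 0 i] 4 by simp
    then have "vert C (Suc m) j (dface C i c) = vert C m m (dface C (i - 1) (dface C 0 c))"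
      using 4 by simp
    also have "\<dots> = vert C (Suc m) (Suc m) (dface C 0 c)"
      using Suc.IH[OF zero, of "i - 1" m] 4 by (auto simp del: vert.simps)
    also have "\<dots> = vert C (Suc (Suc m)) (if j < i then j else Suc j) c"
      using 4 by simp
    finally show ?thesis .
  qed
qed

lemma vert_dface:
  assumes "dcomplex C" "c \<in> dcells C k" "1 \<le> k" "i \<le> k" "j \<le> k - 1"
  shows "vert C (k - 1) j (dface C i c) = vert C k (if j < i then j else Suc j) c"
  using vert_Suc_dface[OF assms(1), of c "k - 1"] assms by (cases k) auto

lemma vert_in_dcells0:
  assumes C: "dcomplex C"
  shows "c \<in> dcells C k \<Longrightarrow> j \<le> k \<Longrightarrow> vert C k j c \<in> dcells C 0"
proof (induction k arbitrary: c j)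
  case 0
  then show ?case by simp
next
  case (Suc k)
  then show ?case using dface_in_dcells[OF C _ Suc.prems(1)] by auto
qed

lemma root_dface:
  assumes "dcomplex C" "c \<in> dcells C k" "1 \<le> i" "i \<le> k"
  shows "root C (k - 1) (dface C i c) = root C k c"
  using vert_dface[OF assms(1,2), of i 0] assms unfolding root_def by auto

lemma root_dface0:
  assumes "dcomplex C" "c \<in> dcells C k" "1 \<le> k"
  shows "root C (k - 1) (dface C 0 c) = vert C k 1 c"
  using vert_dface[OF assms(1,2,3), of 0 0] unfolding root_def by auto

lemma root_in_dcells0: "dcomplex C \<Longrightarrow> c \<in> dcells C k \<Longrightarrow> root C k c \<in> dcells C 0"
  unfolding root_def by (rule vert_in_dcells0) auto

lemma root0 [simp]: "root C 0 c = c"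
  unfolding root_def by simp

declare edge01.simps [simp del]

lemma edge01_le_1 [simp]: "k \<le> 1 \<Longrightarrow> edge01 C k c = c"
  by (simp add: edge01.simps)

lemma edge01_Suc: "1 \<le> k \<Longrightarrow> edge01 C (Suc k) c = edge01 C k (dface C (Suc k) c)"
  by (simp add: edge01.simps)

lemma edge01_faces:
  assumes C: "dcomplex C"
  shows "c \<in> dcells C k \<Longrightarrow> 1 \<le> k \<Longrightarrow> edge01 C k c \<in> dcells C 1 \<and>
     dface C 1 (edge01 C k c) = root C k c \<and> dface C 0 (edge01 C k c) = vert C k 1 c"
proof (induction k arbitrary: c)
  case 0
  then show ?case by simp
next
  case (Suc k)
  show ?case
  proof (cases "k = 0")
    case True
    then show ?thesis using Suc.prems by (simp add: root_def)
  next
    case False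
    have "dface C (Suc k) c \<in> dcells C k"
      using dface_in_dcells[OF C _ Suc.prems(1)] by auto
    moreover have "root C k (dface C (Suc k) c) = root C (Suc k) c"
      using root_dface[OF C Suc.prems(1), of "Suc k"] by simp
    ultimately show ?thesis using Suc.IH False by (simp add: edge01_Suc)
  qed
qed

lemma edge01_dface:
  assumes C: "dcomplex C"
  shows "c \<in> dcells C k \<Longrightarrow> 2 \<le> j \<Longrightarrow> j \<le> k \<Longrightarrow> edge01 C (k - 1) (dface C j c) = edge01 C k c"
proof (induction k arbitrary: c j)
  case 0
  then show ?case by simp
next
  case (Suc k)
  show ?case
  proof (cases "j = Suc k")
    case True
    then show ?thesis using Suc.prems by (simp add: edge01_Suc)
  next
    case False
    have top: "dface C (Suc k) c \<in> dcells C k"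
      using dface_in_dcells[OF C _ Suc.prems(1)] by auto
    have k2: "2 \<le> k" using Suc.prems False by simp
    have "edge01 C k (dface C j c) = edge01 C (k - 1) (dface C k (dface C j c))"
      using k2 edge01_Suc[of "k - 1" C "dface C j c"] by simp
    also have "\<dots> = edge01 C (k - 1) (dface C j (dface C (Suc k) c))"
      using dface_dface[OF C _ Suc.prems(1), of j "Suc k"] False Suc.prems by simp
    also have "\<dots> = edge01 C k (dface C (Suc k) c)"
      using Suc.IH[OF top, of j] Suc.prems False by simp
    also have "\<dots> = edge01 C (Suc k) c"
      using k2 by (simp add: edge01_Suc)
    finally show ?thesis by simp
  qed
qed

definition dmorphism :: "'c dcx \<Rightarrow> 'd dcx \<Rightarrow> ('c \<Rightarrow> 'd) \<Rightarrow> bool" where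
  "dmorphism C D f \<longleftrightarrow> (\<forall>k. \<forall>c\<in>dcells C k. f c \<in> dcells D k) \<and>
     (\<forall>k. \<forall>c\<in>dcells C k. \<forall>i\<le>k. 1 \<le> k \<longrightarrow> f (dface C i c) = dface D i (f c))"

lemma immersion_dmorphism: "immersion C D f \<Longrightarrow> dmorphism C D f"
  unfolding immersion_def dmorphism_def by blast

lemma dc_iso_dmorphism: "dc_iso C D f \<Longrightarrow> dmorphism C D f"
  unfolding dc_iso_def dmorphism_def by blast

lemma dmorphism_cell: "dmorphism C D f \<Longrightarrow> c \<in> dcells C k \<Longrightarrow> f c \<in> dcells D k"
  unfolding dmorphism_def by blast

lemma dmorphism_dface:
  "dmorphism C D f \<Longrightarrow> c \<in> dcells C k \<Longrightarrow> i \<le> k \<Longrightarrow> 1 \<le> k \<Longrightarrow> f (dface C i c) = dface D i (f c)"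
  unfolding dmorphism_def by blast

lemma dmorphism_vert:
  assumes C: "dcomplex C" and f: "dmorphism C D f"
  shows "c \<in> dcells C k \<Longrightarrow> j \<le> k \<Longrightarrow> f (vert C k j c) = vert D k j (f c)"
proof (induction k arbitrary: c j)
  case 0
  then show ?case by simp
next
  case (Suc k)
  have "dface C (Suc k) c \<in> dcells C k" "dface C 0 c \<in> dcells C k"
    using dface_in_dcells[OF C _ Suc.prems(1)] by auto
  moreover have "f (dface C (Suc k) c) = dface D (Suc k) (f c)" "f (dface C 0 c) = dface D 0 (f c)"
    using dmorphism_dface[OF f Suc.prems(1)] by auto
  ultimately show ?case using Suc by auto
qed

lemma dmorphism_root:
  assumes "dcomplex C" "dmorphism C D f" "c \<in> dcells C k"
  shows "f (root C k c) = root D k (f c)"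
  using dmorphism_vert[OF assms] unfolding root_def by simp

lemma dmorphism_edge01:
  assumes C: "dcomplex C" and f: "dmorphism C D f"
  shows "c \<in> dcells C k \<Longrightarrow> 1 \<le> k \<Longrightarrow> f (edge01 C k c) = edge01 D k (f c)"
proof (induction k arbitrary: c)
  case 0
  then show ?case by simp
next
  case (Suc k)
  show ?case
  proof (cases "k = 0")
    case True
    then show ?thesis by simp
  next
    case False
    have "dface C (Suc k) c \<in> dcells C k"
      using dface_in_dcells[OF C _ Suc.prems(1)] by auto
    moreover have "f (dface C (Suc k) c) = dface D (Suc k) (f c)"
      using dmorphism_dface[OF f Suc.prems(1)] by auto
    ultimately show ?thesis using Suc.IH False by (simp add: edge01_Suc)
  qed
qed

lemma dc_iso_inv:
  assumes iso: "dc_iso D1 D2 h" and d1: "dcomplex D1" and d2: "dcomplex D2"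
  shows "dmorphism D2 D1 (inv_into (allcells D1) h)"
proof -
  let ?g = "inv_into (allcells D1) h"
  have bij: "bij_betw h (allcells D1) (allcells D2)" using iso unfolding dc_iso_def by blast
  have h: "dmorphism D1 D2 h" using dc_iso_dmorphism[OF iso] .
  have g_cell: "?g c' \<in> dcells D1 k" and hg: "h (?g c') = c'" if c': "c' \<in> dcells D2 k" for c' k
  proof -
    have "c' \<in> allcells D2" using c' unfolding allcells_def by blast
    then have g: "?g c' \<in> allcells D1" and hg: "h (?g c') = c'"
      using bij by (metis bij_betw_def inv_into_into, metis bij_betw_inv_into_right)
    then obtain j where j: "?g c' \<in> dcells D1 j" unfolding allcells_def by blast
    have "j = k" using dmorphism_cell[OF h j] hg c' dcells_disjoint[OF d2] by metis
    then show "?g c' \<in> dcells D1 k" using j by simp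
    show "h (?g c') = c'" using hg .
  qed
  show ?thesis
    unfolding dmorphism_def
  proof (intro conjI allI ballI impI)
    fix k c' assume "c' \<in> dcells D2 k"
    then show "?g c' \<in> dcells D1 k" by (rule g_cell)
  next
    fix k c' i assume c': "c' \<in> dcells D2 k" and i: "i \<le> k" "1 \<le> k"
    have "h (dface D1 i (?g c')) = dface D2 i c'"
      using dmorphism_dface[OF h g_cell[OF c'] i] hg[OF c'] by simp
    moreover have "dface D1 i (?g c') \<in> allcells D1"
      using dface_in_dcells[OF d1 i(2) g_cell[OF c'] i(1)] unfolding allcells_def by blast
    ultimately show "?g (dface D2 i c') = dface D1 i (?g c')"
      using bij bij_betw_inv_into_left by metis
  qed
qed

lemma immersion_inj:
  "immersion C D f \<Longrightarrow> c1 \<in> dcells C k \<Longrightarrow> c2 \<in> dcells C k \<Longrightarrow> j \<le> k \<Longrightarrow>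
     vert C k j c1 = vert C k j c2 \<Longrightarrow> f c1 = f c2 \<Longrightarrow> c1 = c2"
  unfolding immersion_def by blast

lemma immersion_comp:
  assumes C: "dcomplex C" and f: "immersion C D f" and g: "immersion D E g"
  shows "immersion C E (g \<circ> f)"
proof -
  have cf: "dmorphism C D f" using immersion_dmorphism[OF f] .
  have cg: "dmorphism D E g" using immersion_dmorphism[OF g] .
  show ?thesis unfolding immersion_def
  proof (intro conjI allI ballI impI)
    fix k c assume "c \<in> dcells C k"
    then show "(g \<circ> f) c \<in> dcells E k"
      using dmorphism_cell[OF cf] dmorphism_cell[OF cg] by auto
  next
    fix k c i assume "c \<in> dcells C k" "i \<le> k" "1 \<le> k"
    then show "(g \<circ> f) (dface C i c) = dface E i ((g \<circ> f) c)"
      using dmorphism_dface[OF cf, of c k i] dmorphism_dface[OF cg dmorphism_cell[OF cf], of c k i] by auto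
  next
    fix k c1 c2 j assume c: "c1 \<in> dcells C k" "c2 \<in> dcells C k" "j \<le> k"
      and v: "vert C k j c1 = vert C k j c2" and e: "(g \<circ> f) c1 = (g \<circ> f) c2"
    have "vert D k j (f c1) = vert D k j (f c2)"
      using v dmorphism_vert[OF C cf c(1) c(3)] dmorphism_vert[OF C cf c(2) c(3)] by simp
    then have "f c1 = f c2"
      using immersion_inj[OF g dmorphism_cell[OF cf c(1)] dmorphism_cell[OF cf c(2)] c(3)] e by simp
    then show "c1 = c2" using immersion_inj[OF f c v] by simp
  qed
qed


section \<open>Words and the congruence presenting M(X,P)\<close>

lemma winv_Nil [simp]: "winv [] = []"
  by (simp add: winv_def)

lemma winv_append [simp]: "winv (u @ v) = winv v @ winv u"
  by (simp add: winv_def)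

lemma winv_Cons: "winv (x # w) = winv w @ [(fst x, \<not> snd x)]"
  by (simp add: winv_def case_prod_beta)

lemma winv_winv [simp]: "winv (winv u) = u"
  by (induction u) (auto simp: winv_def)

lemma winv_single [simp]: "winv [(a, b)] = [(a, \<not> b)]"
  by (simp add: winv_def)

lemma words_append [simp]: "u @ v \<in> words B \<longleftrightarrow> u \<in> words B \<and> v \<in> words B"
  by (simp add: words_def)

lemma words_Nil [simp]: "[] \<in> words B"
  by (simp add: words_def)

lemma words_Cons: "x # w \<in> words B \<longleftrightarrow> fst x \<in> Xset B \<union> Pset B \<and> w \<in> words B"
  by (cases x) (auto simp: words_def)

lemma winv_words [simp]: "winv u \<in> words B \<longleftrightarrow> u \<in> words B"
  by (auto simp: words_def winv_def)

lemma words_single [simp]: "[(a, b)] \<in> words B \<longleftrightarrow> a \<in> Xset B \<union> Pset B"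
  by (simp add: words_def)

definition wwinv :: "'l word \<Rightarrow> 'l word" where
  "wwinv w = w @ winv w"

lemma winv_wwinv [simp]: "winv (wwinv w) = wwinv w"
  by (simp add: wwinv_def)

locale base_complex =
  fixes B :: "'l dcx"
  assumes base: "is_base B"
begin

lemma dcomplex_B: "dcomplex B"
  using base unfolding is_base_def by blast

lemma Pset_dim: "\<rho> \<in> Pset B \<longleftrightarrow> (\<exists>k\<ge>2. \<rho> \<in> dcells B k)"
  unfolding Pset_def by auto

lemma Xset_Pset_disjoint: "a \<in> Xset B \<Longrightarrow> a \<in> Pset B \<Longrightarrow> False"
  unfolding Xset_def Pset_dim using dcells_disjoint[OF dcomplex_B] by fastforce

lemma bl_eq:
  "\<rho> \<in> dcells B k \<Longrightarrow> bl B \<rho> =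
     (if k = 2 then [(dface B 2 \<rho>, False), (dface B 0 \<rho>, False), (dface B 1 \<rho>, True)]
      else map (\<lambda>i. (dface B i \<rho>, False)) (rev [1..<Suc k]) @
           [(edge01 B k \<rho>, False), (dface B 0 \<rho>, False), (edge01 B k \<rho>, True)])"
proof -
  assume "\<rho> \<in> dcells B k"
  then have "(THE k. \<rho> \<in> dcells B k) = k" using dcells_disjoint[OF dcomplex_B] by blast
  then show ?thesis unfolding bl_def by simp
qed

lemma bl_words:
  assumes "\<rho> \<in> Pset B"
  shows "bl B \<rho> \<in> words B"
proof -
  obtain k where k: "k \<ge> 2" "\<rho> \<in> dcells B k" using assms Pset_dim by blast
  have f: "\<And>i. i \<le> k \<Longrightarrow> dface B i \<rho> \<in> dcells B (k - 1)"
    using dface_in_dcells[OF dcomplex_B _ k(2)] k by auto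
  show ?thesis
  proof (cases "k = 2")
    case True
    then show ?thesis using f by (simp add: bl_eq[OF k(2)] words_def Xset_def)
  next
    case False
    have "\<And>i. i \<le> k \<Longrightarrow> dface B i \<rho> \<in> Pset B"
      using f False k unfolding Pset_dim by (metis Suc_1 Suc_leI diff_Suc_1 le_neq_implies_less less_diff_conv plus_1_eq_Suc)
    moreover have "edge01 B k \<rho> \<in> Xset B"
      using edge01_faces[OF dcomplex_B k(2)] k unfolding Xset_def by auto
    ultimately show ?thesis using False by (auto simp: bl_eq[OF k(2)] words_def)
  qed
qed

lemma mcong_words: "mcong B u v \<Longrightarrow> u \<in> words B \<and> v \<in> words B"
  by (induction rule: mcong.induct) (auto simp: bl_words words_Cons)

lemma mcong_wordsL: "mcong B u v \<Longrightarrow> u \<in> words B"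
  using mcong_words by blast

lemma mcong_wordsR: "mcong B u v \<Longrightarrow> v \<in> words B"
  using mcong_words by blast

lemma mcong_ctxt: "mcong B u u' \<Longrightarrow> x \<in> words B \<Longrightarrow> y \<in> words B \<Longrightarrow> mcong B (x @ u @ y) (x @ u' @ y)"
  by (metis mcong.cong mcong.refl)

lemma mcong_appendL: "mcong B u u' \<Longrightarrow> x \<in> words B \<Longrightarrow> mcong B (x @ u) (x @ u')"
  using mcong_ctxt[of u u' x "[]"] by simp

lemma mcong_appendR: "mcong B u u' \<Longrightarrow> y \<in> words B \<Longrightarrow> mcong B (u @ y) (u' @ y)"
  using mcong_ctxt[of u u' "[]" y] by simp

lemma mcong_wwinv_comm:
  "u \<in> words B \<Longrightarrow> w \<in> words B \<Longrightarrow> mcong B (wwinv u @ wwinv w) (wwinv w @ wwinv u)"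
  using mcong.inv2[of u B w] by (simp add: wwinv_def)

lemmas mcong_trans [trans] = mcong.trans[of B]

lemma mcong_winv_idem:
  assumes w: "w \<in> words B" and ww: "mcong B (w @ w) w"
  shows "mcong B (winv w) w"
proof -
  define s where "s = winv w"
  have s: "s \<in> words B" "winv s = w" using w by (simp_all add: s_def)
  have sws: "mcong B (s @ w @ s) s" using mcong.inv1[OF s(1)] s(2) by simp
  have wsw: "mcong B (w @ s @ w) w" using mcong.inv1[OF w] by (simp add: s_def)
  have "mcong B (w @ s @ s @ w) ((w @ s @ s) @ (w @ w))"
    using mcong_appendL[OF ww, of "w @ s @ s"] w s by (simp add: mcong.sym)
  also have "mcong B \<dots> ((w @ w) @ (s @ s @ w @ w))"
    using mcong_appendR[OF ww, of "s @ s @ w @ w"] w s by (simp add: mcong.sym)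
  also have "mcong B \<dots> (w @ w)" using mcong.inv1[of "w @ w"] w by (simp add: s_def)
  also have "mcong B \<dots> w" using ww .
  finally have wssw: "mcong B (w @ s @ s @ w) w" .
  have "mcong B (s @ s) ((s @ w @ s) @ (s @ w @ s))"
    using mcong.cong[OF sws sws] by (rule mcong.sym)
  also have "mcong B \<dots> (s @ w @ s)" using mcong_ctxt[OF wssw, of s s] s by simp
  also have "mcong B \<dots> s" using sws .
  finally have ss: "mcong B (s @ s) s" .
  have "mcong B w (w @ s @ w)" using wsw by (rule mcong.sym)
  also have "mcong B \<dots> (w @ s @ s @ w)" using mcong_ctxt[OF mcong.sym[OF ss], of w w] w by simp
  also have "mcong B \<dots> (s @ w @ w @ s)" using mcong_wwinv_comm[OF w s(1)] s by (simp add: wwinv_def s_def)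
  also have "mcong B \<dots> (s @ w @ s)" using mcong_ctxt[OF ww, of s s] s by simp
  also have "mcong B \<dots> s" using sws .
  finally show ?thesis unfolding s_def by (rule mcong.sym)
qed

lemma mcong_Pletter_inv:
  assumes "\<rho> \<in> Pset B"
  shows "mcong B [(\<rho>, True)] [(\<rho>, False)]"
  using mcong_winv_idem[of "[(\<rho>, False)]"] mcong.idem[OF assms] assms by simp

lemma mcong_idem_absorb_winv:
  assumes r: "r \<in> words B" and b: "b \<in> words B"
    and rr: "mcong B (r @ r) r" and rb: "mcong B r (r @ b)"
  shows "mcong B r (winv b @ r)"
proof -
  define t where "t = winv b @ r"
  have t: "t \<in> words B" using r b by (simp add: t_def)
  have sr: "mcong B (winv r) r" using mcong_winv_idem[OF r rr] .
  have "mcong B r (r @ b)" using rb .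
  also have "mcong B \<dots> ((r @ b) @ winv (r @ b) @ (r @ b))"
    using mcong.inv1[of "r @ b"] r b by (simp add: mcong.sym)
  also have "mcong B \<dots> (r @ b @ winv b @ r @ r @ b)"
    using mcong_ctxt[OF sr, of "r @ b @ winv b" "r @ b"] r b by simp
  also have "mcong B \<dots> (r @ b @ winv b @ r @ b)"
    using mcong_ctxt[OF rr, of "r @ b @ winv b" b] r b by simp
  also have "mcong B \<dots> (r @ b @ t)"
    using mcong_appendL[OF mcong.sym[OF rb], of "r @ b @ winv b"] r b by (simp add: t_def)
  also have "mcong B \<dots> (r @ t)" using mcong_appendR[OF mcong.sym[OF rb] t] by simp
  finally have rt: "mcong B r (r @ t)" .
  have tr: "mcong B (t @ r) t" using mcong_appendL[OF rr, of "winv b"] b by (simp add: t_def)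
  have "mcong B (wwinv t) (winv b @ r @ r @ b)"
    using mcong_ctxt[OF sr, of "winv b @ r" b] r b by (simp add: wwinv_def t_def)
  also have "mcong B \<dots> (winv b @ r @ b)" using mcong_ctxt[OF rr, of "winv b" b] b by simp
  also have "mcong B \<dots> t" using mcong_appendL[OF mcong.sym[OF rb], of "winv b"] b by (simp add: t_def)
  finally have tt: "mcong B (wwinv t) t" .
  have rdd: "mcong B (wwinv r) r"
    using mcong_appendL[OF sr, of r] rr r by (simp add: wwinv_def) (meson mcong.trans)
  have "mcong B (r @ t) (wwinv r @ wwinv t)" using mcong.cong[OF rdd tt] by (rule mcong.sym)
  also have "mcong B \<dots> (wwinv t @ wwinv r)" using mcong_wwinv_comm r t by blast
  also have "mcong B \<dots> (t @ r)" using mcong.cong[OF tt rdd] .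
  also have "mcong B \<dots> t" using tr .
  finally show ?thesis using rt unfolding t_def by (meson mcong.trans)
qed

lemma mcong_rel_inv:
  assumes "\<rho> \<in> Pset B"
  shows "mcong B [(\<rho>, False)] (winv (bl B \<rho>) @ [(\<rho>, False)])"
  using mcong_idem_absorb_winv[of "[(\<rho>, False)]" "bl B \<rho>"]
    bl_words[OF assms] mcong.idem[OF assms] mcong.rel[OF assms] assms by simp

lemma mcong_winv: "mcong B u v \<Longrightarrow> mcong B (winv u) (winv v)"
proof (induction rule: mcong.induct)
  case (refl w)
  then show ?case by (simp add: mcong.refl)
next
  case (sym u v)
  then show ?case using mcong.sym by blast
next
  case (trans u v w)
  then show ?case using mcong.trans by blast
next
  case (cong u u' v v')
  then show ?case by (simp add: mcong.cong)
next
  case (inv1 w)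
  then show ?case using mcong.inv1[of "winv w"] by simp
next
  case (inv2 u w)
  then show ?case using mcong_wwinv_comm[OF inv2(2) inv2(1)] by (simp add: wwinv_def)
next
  case (idem \<rho>)
  have sr: "mcong B [(\<rho>, True)] [(\<rho>, False)]" using mcong_Pletter_inv[OF idem] .
  have "mcong B [(\<rho>, True), (\<rho>, True)] [(\<rho>, False), (\<rho>, False)]"
    using mcong.cong[OF sr sr] by simp
  then show ?case using mcong.idem[OF idem] sr by (simp add: winv_def) (meson mcong.sym mcong.trans)
next
  case (rel \<rho>)
  have sr: "mcong B [(\<rho>, True)] [(\<rho>, False)]" using mcong_Pletter_inv[OF rel] .
  have "mcong B (winv (bl B \<rho>) @ [(\<rho>, False)]) (winv (bl B \<rho>) @ [(\<rho>, True)])"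
    using mcong_appendL[OF mcong.sym[OF sr]] bl_words[OF rel] by simp
  then show ?case using mcong_rel_inv[OF rel] sr
    by (simp add: winv_Cons) (meson mcong.sym mcong.trans)
qed

text \<open>In an inverse monoid the idempotents are exactly the elements of the form w w\<inverse>.\<close>

definition idem_word :: "'l word \<Rightarrow> bool" where
  "idem_word e \<longleftrightarrow> e \<in> words B \<and> mcong B e (wwinv e)"

lemma idem_word_words: "idem_word e \<Longrightarrow> e \<in> words B" by (simp add: idem_word_def)

lemma idem_word_wwinv: "w \<in> words B \<Longrightarrow> idem_word (wwinv w)"
  unfolding idem_word_def using mcong_appendR[OF mcong.inv1[of w], of "winv w"] by (simp add: wwinv_def mcong.sym)

lemma idem_word_Nil: "idem_word []" by (simp add: idem_word_def wwinv_def mcong.refl)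

lemma idem_word_idem: "idem_word e \<Longrightarrow> mcong B (e @ e) e"
proof -
  assume d: "idem_word e"
  have w: "e \<in> words B" using d by (simp add: idem_word_def)
  have "mcong B (e @ e) (wwinv e @ wwinv e)" using d by (simp add: idem_word_def mcong.cong)
  moreover have "mcong B (wwinv e @ wwinv e) (wwinv e)" using mcong_appendR[OF mcong.inv1[OF w], of "winv e"] w by (simp add: wwinv_def)
  ultimately show ?thesis using d by (simp add: idem_word_def) (meson mcong.sym mcong.trans)
qed

lemma idem_word_winv: "idem_word e \<Longrightarrow> mcong B (winv e) e"
  using mcong_winv[of e "wwinv e"] by (simp add: idem_word_def) (meson mcong.sym mcong.trans)

lemma idem_word_comm: "idem_word e \<Longrightarrow> idem_word f \<Longrightarrow> mcong B (e @ f) (f @ e)"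
proof -
  assume d: "idem_word e" "idem_word f"
  have "mcong B (e @ f) (wwinv e @ wwinv f)" using d by (simp add: idem_word_def mcong.cong)
  moreover have "mcong B (wwinv e @ wwinv f) (wwinv f @ wwinv e)" using d mcong_wwinv_comm by (simp add: idem_word_def)
  moreover have "mcong B (wwinv f @ wwinv e) (f @ e)" using d by (simp add: idem_word_def mcong.cong mcong.sym)
  ultimately show ?thesis by (meson mcong.trans)
qed

lemma idem_word_mcong: "mcong B e f \<Longrightarrow> idem_word e \<Longrightarrow> idem_word f"
proof -
  assume m: "mcong B e f" and d: "idem_word e"
  have "mcong B (wwinv e) (wwinv f)" using m mcong_winv[OF m] by (simp add: wwinv_def mcong.cong)
  then show ?thesis using m d mcong_wordsR[OF m] unfolding idem_word_def by (meson mcong.sym mcong.trans)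
qed

lemma idem_word_append: "idem_word e \<Longrightarrow> idem_word f \<Longrightarrow> idem_word (e @ f)"
proof -
  assume d: "idem_word e" "idem_word f"
  have w: "e \<in> words B" "f \<in> words B" using d by (auto simp: idem_word_def)
  have "wwinv (e @ f) = e @ f @ winv f @ winv e" by (simp add: wwinv_def)
  moreover have "mcong B (e @ f @ winv f @ winv e) (e @ f @ f @ e)"
    using mcong.cong[OF mcong.refl[of "e @ f"] mcong.cong[OF idem_word_winv[OF d(2)] idem_word_winv[OF d(1)]]] w by simp
  moreover have "mcong B (e @ f @ f @ e) (e @ f @ e)" using mcong_ctxt[OF idem_word_idem[OF d(2)], of e e] w by simp
  moreover have "mcong B (e @ f @ e) (e @ e @ f)" using mcong_appendL[OF idem_word_comm[OF d(2) d(1)], of e] w by simp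
  moreover have "mcong B (e @ e @ f) (e @ f)" using mcong_appendR[OF idem_word_idem[OF d(1)], of f] w by simp
  ultimately show ?thesis unfolding idem_word_def using w by (simp del: append_assoc add: append_assoc[symmetric])
      (meson mcong.sym mcong.trans)
qed

lemma idem_word_Pletter: "\<rho> \<in> Pset B \<Longrightarrow> idem_word [(\<rho>, b)]"
proof -
  assume P: "\<rho> \<in> Pset B"
  have r: "idem_word [(\<rho>, False)]"
  proof -
    have "mcong B [(\<rho>, False), (\<rho>, True)] [(\<rho>, False), (\<rho>, False)]"
      using mcong_appendL[OF mcong_Pletter_inv[OF P], of "[(\<rho>, False)]"] P by simp
    then show ?thesis using mcong.idem[OF P] P unfolding idem_word_def wwinv_def by simp (meson mcong.sym mcong.trans)
  qed
  show ?thesis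
  proof (cases b)
    case True then show ?thesis using idem_word_mcong[OF mcong.sym[OF mcong_Pletter_inv[OF P]] r] by simp
  next
    case False then show ?thesis using r by simp
  qed
qed

definition wle :: "'l word \<Rightarrow> 'l word \<Rightarrow> bool" where
  "wle u v \<longleftrightarrow> (\<exists>e. idem_word e \<and> mcong B u (e @ v))"

lemma wle_words: "wle u v \<Longrightarrow> u \<in> words B \<and> v \<in> words B"
proof -
  assume "wle u v"
  then obtain e where "mcong B u (e @ v)" unfolding wle_def by blast
  then show ?thesis using mcong_words[of u "e @ v"] by simp
qed

lemma wle_refl: "v \<in> words B \<Longrightarrow> wle v v"
  unfolding wle_def using idem_word_Nil mcong.refl by fastforce

lemma wle_trans: "wle u v \<Longrightarrow> wle v w \<Longrightarrow> wle u w"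
proof -
  assume "wle u v" "wle v w"
  then obtain e f where e: "idem_word e" "mcong B u (e @ v)" and f: "idem_word f" "mcong B v (f @ w)"
    unfolding wle_def by blast
  have "mcong B (e @ v) (e @ f @ w)" using mcong_appendL[OF f(2)] idem_word_words[OF e(1)] .
  then show ?thesis unfolding wle_def using e f idem_word_append
    by (metis append.assoc mcong.trans)
qed

lemma wle_mcong: "mcong B u u' \<Longrightarrow> mcong B v v' \<Longrightarrow> wle u v \<Longrightarrow> wle u' v'"
proof -
  assume m: "mcong B u u'" "mcong B v v'" and "wle u v"
  then obtain e where e: "idem_word e" "mcong B u (e @ v)" unfolding wle_def by blast
  have "mcong B (e @ v) (e @ v')" using mcong_appendL[OF m(2) idem_word_words[OF e(1)]] .
  then show ?thesis unfolding wle_def using e m by (meson mcong.sym mcong.trans)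
qed

lemma wle_appendR: "wle u v \<Longrightarrow> y \<in> words B \<Longrightarrow> wle (u @ y) (v @ y)"
  unfolding wle_def using mcong_appendR by fastforce

lemma wle_appendL: assumes l: "wle u v" and x: "x \<in> words B" shows "wle (x @ u) (x @ v)"
proof -
  obtain e where e: "idem_word e" "mcong B u (e @ v)" using l unfolding wle_def by blast
  have we: "e \<in> words B" using idem_word_words[OF e(1)] .
  have wv: "v \<in> words B" using mcong_wordsR[OF e(2)] by simp
  have d1: "idem_word (winv x @ x)" using idem_word_wwinv[of "winv x"] x by (simp add: wwinv_def)
  have c1: "mcong B (x @ e) (x @ e @ winv x @ x)"
  proof -
    have "mcong B (x @ e @ winv x @ x) (x @ (winv x @ x) @ e)" using mcong_appendL[OF idem_word_comm[OF e(1) d1] x] by simp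
    moreover have "mcong B (x @ (winv x @ x) @ e) (x @ e)" using mcong_appendR[OF mcong.inv1[OF x] we] by simp
    ultimately show ?thesis by (meson mcong.sym mcong.trans)
  qed
  define f where "f = x @ e @ winv x"
  have df: "idem_word f"
  proof -
    have "wwinv f = (x @ e @ winv x @ x) @ winv e @ winv x" by (simp add: wwinv_def f_def)
    moreover have "mcong B ((x @ e @ winv x @ x) @ winv e @ winv x) ((x @ e) @ winv e @ winv x)"
      using mcong_appendR[OF mcong.sym[OF c1]] we x by simp
    moreover have "mcong B ((x @ e) @ winv e @ winv x) ((x @ e) @ e @ winv x)"
      using mcong_ctxt[OF idem_word_winv[OF e(1)], of "x @ e" "winv x"] we x by simp
    moreover have "mcong B ((x @ e) @ e @ winv x) (x @ e @ winv x)"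
      using mcong_ctxt[OF idem_word_idem[OF e(1)], of x "winv x"] x by simp
    ultimately show ?thesis unfolding idem_word_def f_def using x we by simp (meson mcong.sym mcong.trans)
  qed
  have "mcong B (x @ u) (x @ e @ v)" using mcong_appendL[OF e(2) x] .
  moreover have "mcong B (x @ e @ v) (f @ x @ v)" using mcong_appendR[OF c1 wv] by (simp add: f_def)
  ultimately show ?thesis unfolding wle_def using df by (meson mcong.trans)
qed

lemma wle_drop_idem: "idem_word e \<Longrightarrow> x \<in> words B \<Longrightarrow> y \<in> words B \<Longrightarrow> wle (x @ e @ y) (x @ y)"
proof -
  assume d: "idem_word e" "x \<in> words B" "y \<in> words B"
  have "wle e []" unfolding wle_def using d(1) mcong.refl idem_word_words by fastforce
  then show ?thesis using wle_appendL[OF wle_appendR[of e "[]" y] d(2)] d by simp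
qed

lemma wle_winv: "wle u v \<Longrightarrow> wle (winv u) (winv v)"
proof -
  assume "wle u v"
  then obtain e where e: "idem_word e" "mcong B u (e @ v)" unfolding wle_def by blast
  have wv: "v \<in> words B" using mcong_wordsR[OF e(2)] by simp
  have a: "mcong B (winv u) (winv v @ winv e)" using mcong_winv[OF e(2)] by simp
  have b: "mcong B (winv v @ winv e) (winv v @ e)" using mcong_appendL[OF idem_word_winv[OF e(1)]] wv by simp
  have c: "wle (winv v @ e) (winv v)" using wle_drop_idem[OF e(1), of "winv v" "[]"] wv by simp
  show ?thesis using wle_mcong[OF mcong.sym[OF mcong.trans[OF a b]] mcong.refl c] wv by simp
qed

lemma wle_wwinv: assumes d: "idem_word e" and l: "wle e x" shows "wle e (wwinv x)"
proof -
  obtain f where f: "idem_word f" "mcong B e (f @ x)" using l unfolding wle_def by blast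
  have wx: "x \<in> words B" using mcong_wordsR[OF f(2)] by simp
  have wf: "f \<in> words B" using idem_word_words[OF f(1)] .
  have "mcong B e (wwinv e)" using d by (simp add: idem_word_def)
  moreover have "mcong B (wwinv e) (f @ x @ winv x @ winv f)"
    using mcong.cong[OF f(2) mcong_winv[OF f(2)]] by (simp add: wwinv_def)
  moreover have "mcong B (f @ x @ winv x @ winv f) (f @ wwinv x @ f)"
    using mcong_appendL[OF idem_word_winv[OF f(1)], of "f @ x @ winv x"] wf wx by (simp add: wwinv_def)
  moreover have "mcong B (f @ wwinv x @ f) (f @ f @ wwinv x)"
    using mcong_appendL[OF idem_word_comm[OF idem_word_wwinv[OF wx] f(1)] wf] .
  moreover have "mcong B (f @ f @ wwinv x) (f @ wwinv x)"
    using mcong_appendR[OF idem_word_idem[OF f(1)], of "wwinv x"] wx by (simp add: wwinv_def)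
  ultimately show ?thesis unfolding wle_def using f(1) by (meson mcong.trans)
qed

lemma wle_wwinv_prefix:
  assumes e: "idem_word e" and l: "wle e (x @ y)"
  shows "wle e (wwinv x)"
proof -
  have w: "x \<in> words B" "y \<in> words B" using wle_words[OF l] by auto
  have "wle (x @ wwinv y @ winv x) (x @ winv x)"
    using wle_drop_idem[OF idem_word_wwinv[OF w(2)] w(1)] w by simp
  then show ?thesis using wle_trans[OF wle_wwinv[OF e l]] by (simp add: wwinv_def)
qed

lemma idem_word_conj: assumes e: "idem_word e" and x: "x \<in> words B" shows "idem_word (x @ e @ winv x)"
proof -
  have we: "e \<in> words B" using idem_word_words[OF e] .
  have d1: "idem_word (winv x @ x)" using idem_word_wwinv[of "winv x"] x by (simp add: wwinv_def)
  have h0: "wwinv (x @ e @ winv x) = x @ e @ winv x @ x @ winv e @ winv x" by (simp add: wwinv_def)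
  have h1: "mcong B (x @ e @ (winv x @ x) @ winv e @ winv x) (x @ e @ (winv x @ x) @ e @ winv x)"
    using mcong_ctxt[OF idem_word_winv[OF e], of "x @ e @ winv x @ x" "winv x"] x we by simp
  have h2: "mcong B (x @ e @ (winv x @ x) @ e @ winv x) (x @ (winv x @ x) @ e @ e @ winv x)"
    using mcong_ctxt[OF idem_word_comm[OF e d1], of x "e @ winv x"] x we by simp
  have h3: "mcong B (x @ (winv x @ x) @ e @ e @ winv x) (x @ e @ e @ winv x)"
    using mcong_appendR[OF mcong.inv1[OF x], of "e @ e @ winv x"] x we by simp
  have h4: "mcong B (x @ e @ e @ winv x) (x @ e @ winv x)"
    using mcong_ctxt[OF idem_word_idem[OF e], of x "winv x"] x by simp
  have "mcong B (wwinv (x @ e @ winv x)) (x @ e @ winv x)"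
    using mcong.trans[OF h1 mcong.trans[OF h2 mcong.trans[OF h3 h4]]] h0 by simp
  then show ?thesis unfolding idem_word_def using x we by (simp add: mcong.sym)
qed

lemma wle_idem_appendL: "idem_word A \<Longrightarrow> idem_word C' \<Longrightarrow> wle (A @ C') A"
  using wle_drop_idem[of C' A "[]"] idem_word_words by simp

lemma wle_idem_appendR: "idem_word A \<Longrightarrow> idem_word C' \<Longrightarrow> wle (A @ C') C'"
  using wle_drop_idem[of A "[]" C'] idem_word_words by simp

lemma idem_word_list: "(\<forall>x\<in>set xs. idem_word [x]) \<Longrightarrow> idem_word xs"
proof (induction xs)
  case Nil show ?case by (rule idem_word_Nil)
next
  case (Cons x xs) then show ?case using idem_word_append[of "[x]" xs] by simp
qed

lemma wle_idem_list_mem: "(\<forall>x\<in>set xs. idem_word [x]) \<Longrightarrow> y \<in> set xs \<Longrightarrow> wle xs [y]"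
proof -
  assume a: "\<forall>x\<in>set xs. idem_word [x]" and y: "y \<in> set xs"
  obtain pre post where xs: "xs = pre @ y # post" using split_list[OF y] by blast
  have d: "idem_word pre" "idem_word post" "idem_word [y]" using a xs idem_word_list[of pre] idem_word_list[of post] by auto
  have "wle (pre @ [y] @ post) (pre @ [y])" using wle_idem_appendL[OF idem_word_append[OF d(1) d(3)] d(2)] by simp
  moreover have "wle (pre @ [y]) [y]" using wle_idem_appendR[OF d(1) d(3)] .
  ultimately have "wle (pre @ [y] @ post) [y]" by (rule wle_trans)
  then show ?thesis using xs by simp
qed

lemma wle_conj: "wle a b \<Longrightarrow> p \<in> words B \<Longrightarrow> wle (p @ a @ winv p) (p @ b @ winv p)"
  using wle_appendL wle_appendR winv_words by (metis append.assoc)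

abbreviation cls :: "'l word \<Rightarrow> 'l word set" where "cls w \<equiv> Mrel B `` {w}"

lemma equiv_Mrel: "equiv (words B) (Mrel B)"
  unfolding equiv_def refl_on_def sym_def trans_def Mrel_def
  using mcong_words mcong.refl mcong.sym mcong.trans by blast

lemma cls_in_Mcar: "w \<in> words B \<Longrightarrow> cls w \<in> Mcar B"
  unfolding Mcar_def by (rule quotientI)

lemma McarE: "m \<in> Mcar B \<Longrightarrow> (\<And>w. w \<in> words B \<Longrightarrow> m = cls w \<Longrightarrow> P) \<Longrightarrow> P"
  unfolding Mcar_def by (erule quotientE) blast

lemma cls_eq_iff: "u \<in> words B \<Longrightarrow> v \<in> words B \<Longrightarrow> cls u = cls v \<longleftrightarrow> mcong B u v"
  using eq_equiv_class_iff[OF equiv_Mrel] unfolding Mrel_def by blast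

lemma in_cls_iff: "w \<in> cls u \<longleftrightarrow> mcong B u w"
  unfolding Mrel_def by simp

lemma cls_self: "w \<in> words B \<Longrightarrow> w \<in> cls w"
  using in_cls_iff mcong.refl by blast

lemma mmul_cls: "u \<in> words B \<Longrightarrow> v \<in> words B \<Longrightarrow> mmul B (cls u) (cls v) = cls (u @ v)"
proof -
  assume w: "u \<in> words B" "v \<in> words B"
  have "x \<in> cls (u @ v)" if xm: "x \<in> mmul B (cls u) (cls v)" for x
  proof -
    obtain u' v' where "u' \<in> cls u" "v' \<in> cls v" "x \<in> cls (u' @ v')"
      using xm unfolding mmul_def by blast
    then show ?thesis unfolding in_cls_iff using mcong.cong mcong.trans by blast
  qed
  moreover have "cls (u @ v) \<subseteq> mmul B (cls u) (cls v)"
    unfolding mmul_def using cls_self w by blast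
  ultimately show ?thesis by blast
qed

lemma minv_cls: "u \<in> words B \<Longrightarrow> minv B (cls u) = cls (winv u)"
proof -
  assume w: "u \<in> words B"
  have "x \<in> cls (winv u)" if xm: "x \<in> minv B (cls u)" for x
  proof -
    obtain u' where "u' \<in> cls u" "x \<in> cls (winv u')"
      using xm unfolding minv_def by blast
    then show ?thesis unfolding in_cls_iff using mcong_winv mcong.trans by blast
  qed
  moreover have "cls (winv u) \<subseteq> minv B (cls u)"
    unfolding minv_def using cls_self w by blast
  ultimately show ?thesis by blast
qed

lemma mone_cls: "mone B = cls []" by (simp add: mone_def)

lemma midem_cls: "idem_word e \<Longrightarrow> midem B (cls e)"
  unfolding midem_def using cls_in_Mcar idem_word_words mmul_cls idem_word_idem cls_eq_iff
  by (metis words_append)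

lemma mleq_cls: "wle u v \<Longrightarrow> mleq B (cls u) (cls v)"
proof -
  assume l: "wle u v"
  then obtain e where e: "idem_word e" "mcong B u (e @ v)" unfolding wle_def by blast
  have w: "u \<in> words B" "v \<in> words B" "e \<in> words B" using wle_words[OF l] idem_word_words[OF e(1)] by auto
  have "cls u = mmul B (cls e) (cls v)" using mmul_cls[OF w(3) w(2)] cls_eq_iff e(2) w by simp
  then show ?thesis unfolding mleq_def using cls_in_Mcar w midem_cls[OF e(1)] by blast
qed

lemma closed_upward:
  assumes H: "closed_inv_submonoid B S H" and u: "cls u \<in> H" and l: "wle u v" and S: "cls v \<in> S"
  shows "cls v \<in> H"
proof -
  have "cls v \<in> {m \<in> S. \<exists>n\<in>H. mleq B n m}" using S u mleq_cls[OF l] by blast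
  then show ?thesis using H unfolding closed_inv_submonoid_def by simp
qed

lemma closed_mul: "closed_inv_submonoid B S H \<Longrightarrow> cls u \<in> H \<Longrightarrow> cls v \<in> H \<Longrightarrow>
   u \<in> words B \<Longrightarrow> v \<in> words B \<Longrightarrow> cls (u @ v) \<in> H"
proof -
  assume a: "closed_inv_submonoid B S H" "cls u \<in> H" "cls v \<in> H" "u \<in> words B" "v \<in> words B"
  have "mmul B (cls u) (cls v) \<in> H" using a(1-3) unfolding closed_inv_submonoid_def inv_submonoid_def by blast
  then show ?thesis using mmul_cls[OF a(4,5)] by simp
qed

lemma closed_inv: "closed_inv_submonoid B S H \<Longrightarrow> cls u \<in> H \<Longrightarrow> u \<in> words B \<Longrightarrow> cls (winv u) \<in> H"
proof -
  assume a: "closed_inv_submonoid B S H" "cls u \<in> H" "u \<in> words B"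
  have "minv B (cls u) \<in> H" using a(1-2) unfolding closed_inv_submonoid_def inv_submonoid_def by blast
  then show ?thesis using minv_cls[OF a(3)] by simp
qed

lemma closed_one: "closed_inv_submonoid B S H \<Longrightarrow> cls [] \<in> H"
  unfolding closed_inv_submonoid_def inv_submonoid_def mone_cls by blast

lemma closed_sub: "closed_inv_submonoid B S H \<Longrightarrow> H \<subseteq> S"
  unfolding closed_inv_submonoid_def inv_submonoid_def by blast

lemma closed_cong: "cls u \<in> H \<Longrightarrow> mcong B u v \<Longrightarrow> cls v \<in> H"
proof -
  assume a: "cls u \<in> H" "mcong B u v"
  have "cls u = cls v" using cls_eq_iff[OF mcong_wordsL[OF a(2)] mcong_wordsR[OF a(2)]] a(2) by simp
  then show ?thesis using a by simp
qed

lemma cls_Mcar_words: "cls a \<in> Mcar B \<Longrightarrow> a \<in> words B"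
proof -
  assume "cls a \<in> Mcar B"
  then obtain w where w: "w \<in> words B" "cls a = cls w" by (rule McarE)
  then have "w \<in> cls a" using cls_self by simp
  then show ?thesis using in_cls_iff mcong_wordsL by blast
qed

end

section \<open>The action of words on 0-cells\<close>

lemma fold_bind_None: "fold (\<lambda>x ov. Option.bind ov (\<lambda>v'. g v' x)) w None = None"
  by (induction w) auto

lemma if_Ex1_THE_eq_Some:
  assumes "\<And>e e'. P e \<Longrightarrow> P e' \<Longrightarrow> e = e'"
  shows "(if \<exists>!e. P e then Some (g (THE e. P e)) else None) = Some w \<longleftrightarrow> (\<exists>e. P e \<and> g e = w)"
proof
  assume "(if \<exists>!e. P e then Some (g (THE e. P e)) else None) = Some w"
  then show "\<exists>e. P e \<and> g e = w" by (metis option.distinct(1) option.inject theI)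
next
  assume "\<exists>e. P e \<and> g e = w"
  then obtain e where "P e" "g e = w" by blast
  moreover have "(THE e. P e) = e" using \<open>P e\<close> assms by blast
  ultimately show "(if \<exists>!e. P e then Some (g (THE e. P e)) else None) = Some w" using assms by auto
qed

locale labeled_complex = base_complex B for B :: "'l dcx" +
  fixes C :: "'c dcx" and lab :: "'c \<Rightarrow> 'l"
  assumes labC: "labeled B C lab"
begin

lemma dcomplex_C: "dcomplex C" using labC unfolding labeled_def by blast
lemma immersion_lab: "immersion C B lab" using labC unfolding labeled_def by blast
lemma dmorphism_lab: "dmorphism C B lab" using immersion_dmorphism[OF immersion_lab] .

lemma lab_cell: "c \<in> dcells C k \<Longrightarrow> lab c \<in> dcells B k" using dmorphism_cell[OF dmorphism_lab] .
lemma lab_dface: "c \<in> dcells C k \<Longrightarrow> i \<le> k \<Longrightarrow> 1 \<le> k \<Longrightarrow> lab (dface C i c) = dface B i (lab c)"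
  using dmorphism_dface[OF dmorphism_lab] .

lemma lab_X: "e \<in> dcells C 1 \<Longrightarrow> lab e \<in> Xset B" using lab_cell unfolding Xset_def by blast
lemma lab_P: "c \<in> dcells C k \<Longrightarrow> 2 \<le> k \<Longrightarrow> lab c \<in> Pset B" using lab_cell unfolding Pset_dim by blast
lemma dim_P: "c \<in> dcells C k \<Longrightarrow> lab c \<in> Pset B \<Longrightarrow> 2 \<le> k"
  using lab_cell dcells_disjoint[OF dcomplex_B] unfolding Pset_dim by blast

lemma dim_eq: "c1 \<in> dcells C k1 \<Longrightarrow> c2 \<in> dcells C k2 \<Longrightarrow> lab c1 = lab c2 \<Longrightarrow> k1 = k2"
  using lab_cell dcells_disjoint[OF dcomplex_B] by metis

lemma edge_out_uniq: "e1 \<in> dcells C 1 \<Longrightarrow> e2 \<in> dcells C 1 \<Longrightarrow> lab e1 = lab e2 \<Longrightarrow>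
   dface C 1 e1 = dface C 1 e2 \<Longrightarrow> e1 = e2"
  using immersion_inj[OF immersion_lab, of e1 1 e2 0] by simp

lemma edge_in_uniq: "e1 \<in> dcells C 1 \<Longrightarrow> e2 \<in> dcells C 1 \<Longrightarrow> lab e1 = lab e2 \<Longrightarrow>
   dface C 0 e1 = dface C 0 e2 \<Longrightarrow> e1 = e2"
  using immersion_inj[OF immersion_lab, of e1 1 e2 1] by simp

lemma root_uniq: "c1 \<in> dcells C k1 \<Longrightarrow> c2 \<in> dcells C k2 \<Longrightarrow> lab c1 = lab c2 \<Longrightarrow>
   root C k1 c1 = root C k2 c2 \<Longrightarrow> c1 = c2"
proof -
  assume a: "c1 \<in> dcells C k1" "c2 \<in> dcells C k2" "lab c1 = lab c2" "root C k1 c1 = root C k2 c2"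
  have "k1 = k2" using dim_eq a by blast
  then show ?thesis using immersion_inj[OF immersion_lab a(1), of c2 0] a unfolding root_def by simp
qed

definition moves :: "'c \<Rightarrow> 'l \<times> bool \<Rightarrow> 'c \<Rightarrow> bool" where
  "moves v x w \<longleftrightarrow> (case x of (a, b) \<Rightarrow>
     (a \<in> Xset B \<and> \<not> b \<and> (\<exists>e\<in>dcells C 1. lab e = a \<and> dface C 1 e = v \<and> dface C 0 e = w)) \<or>
     (a \<in> Xset B \<and> b \<and> (\<exists>e\<in>dcells C 1. lab e = a \<and> dface C 0 e = v \<and> dface C 1 e = w)) \<or>
     (a \<in> Pset B \<and> w = v \<and> (\<exists>k c. c \<in> dcells C k \<and> lab c = a \<and> root C k c = v)))"

lemma step_eq_Some_iff: "step B C lab v x = Some w \<longleftrightarrow> moves v x w"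
proof (cases x)
  case (Pair a b)
  have out: "(if \<exists>!e. e \<in> dcells C 1 \<and> lab e = a \<and> dface C 1 e = v
      then Some (dface C 0 (THE e. e \<in> dcells C 1 \<and> lab e = a \<and> dface C 1 e = v)) else None) = Some w
    \<longleftrightarrow> (\<exists>e. (e \<in> dcells C 1 \<and> lab e = a \<and> dface C 1 e = v) \<and> dface C 0 e = w)"
    by (rule if_Ex1_THE_eq_Some) (elim conjE, rule edge_out_uniq, simp_all)
  have inc: "(if \<exists>!e. e \<in> dcells C 1 \<and> lab e = a \<and> dface C 0 e = v
      then Some (dface C 1 (THE e. e \<in> dcells C 1 \<and> lab e = a \<and> dface C 0 e = v)) else None) = Some w
    \<longleftrightarrow> (\<exists>e. (e \<in> dcells C 1 \<and> lab e = a \<and> dface C 0 e = v) \<and> dface C 1 e = w)"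
    by (rule if_Ex1_THE_eq_Some) (elim conjE, rule edge_in_uniq, simp_all)
  show ?thesis
  proof (cases "a \<in> Xset B")
    case True
    then have "a \<notin> Pset B" using Xset_Pset_disjoint by blast
    with True show ?thesis using Pair out inc by (cases b) (simp_all add: step_def moves_def Bex_def)
  next
    case False
    then show ?thesis using Pair by (auto simp: step_def moves_def)
  qed
qed

lemma step_eq_None_iff: "step B C lab v x = None \<longleftrightarrow> (\<forall>w. \<not> moves v x w)"
  using step_eq_Some_iff by (metis not_None_eq)

lemma moves_flip: "moves v (a, b) w \<Longrightarrow> moves w (a, \<not> b) v"
  unfolding moves_def by auto

lemma step_edge_forward: "e \<in> dcells C 1 \<Longrightarrow> step B C lab (dface C 1 e) (lab e, False) = Some (dface C 0 e)"
  using step_eq_Some_iff lab_X unfolding moves_def by auto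

lemma step_edge_backward: "e \<in> dcells C 1 \<Longrightarrow> step B C lab (dface C 0 e) (lab e, True) = Some (dface C 1 e)"
  using step_eq_Some_iff lab_X unfolding moves_def by auto

lemma step_Pcell_root: "c \<in> dcells C k \<Longrightarrow> 2 \<le> k \<Longrightarrow> step B C lab (root C k c) (lab c, b) = Some (root C k c)"
  using step_eq_Some_iff lab_P unfolding moves_def by blast

lemma act_Nil[simp]: "act B C lab v [] = Some v" by (simp add: act_def)

lemma act_Cons: "act B C lab v (x # w) = (case step B C lab v x of None \<Rightarrow> None | Some y \<Rightarrow> act B C lab y w)"
  by (cases "step B C lab v x") (simp_all add: act_def fold_bind_None)

lemma act_append: "act B C lab v (u @ w) = (case act B C lab v u of None \<Rightarrow> None | Some y \<Rightarrow> act B C lab y w)"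
proof (induction u arbitrary: v)
  case Nil then show ?case by simp
next
  case (Cons x u) then show ?case by (simp add: act_Cons split: option.split)
qed

lemma act_single: "act B C lab v [x] = step B C lab v x"
  by (simp add: act_Cons split: option.split)

lemma act_snoc: "act B C lab v (u @ [x]) = (case act B C lab v u of None \<Rightarrow> None | Some y \<Rightarrow> step B C lab y x)"
  by (simp add: act_append act_single split: option.split)

lemma step_flip: "step B C lab v (a, b) = Some w \<Longrightarrow> step B C lab w (a, \<not> b) = Some v"
  using step_eq_Some_iff moves_flip by blast

lemma act_winv: "act B C lab v w = Some y \<Longrightarrow> act B C lab y (winv w) = Some v"
proof (induction w arbitrary: v)
  case Nil then show ?case by simp
next
  case (Cons x w)
  obtain a b where x: "x = (a, b)" by (cases x)
  obtain v1 where s: "step B C lab v x = Some v1" and r: "act B C lab v1 w = Some y"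
    using Cons.prems by (auto simp: act_Cons split: option.splits)
  have "act B C lab y (winv w) = Some v1" using Cons.IH[OF r] .
  moreover have "step B C lab v1 (a, \<not> b) = Some v" using step_flip s x by simp
  ultimately show ?case by (simp add: winv_Cons x act_snoc)
qed

lemma act_inj: "act B C lab v1 w = Some y \<Longrightarrow> act B C lab v2 w = Some y \<Longrightarrow> v1 = v2"
proof -
  assume a: "act B C lab v1 w = Some y" and b: "act B C lab v2 w = Some y"
  have "act B C lab y (winv w) = Some v1" using act_winv[OF a] .
  moreover have "act B C lab y (winv w) = Some v2" using act_winv[OF b] .
  ultimately show ?thesis by simp
qed

lemma act_wwinv_prefix: "act B C lab v (u @ winv u @ w) = (if act B C lab v u = None then None else act B C lab v w)"
proof (cases "act B C lab v u")
  case None then show ?thesis by (simp add: act_append)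
next
  case (Some y)
  then show ?thesis using act_winv[OF Some] by (simp add: act_append)
qed

lemma act_prefix: "act B C lab v (u @ w) = Some y \<Longrightarrow> \<exists>z. act B C lab v u = Some z \<and> act B C lab z w = Some y"
  by (auto simp: act_append split: option.splits)

lemma act_faces_root:
  assumes c: "c \<in> dcells C k" and k: "3 \<le> k"
  shows "set xs \<subseteq> {1..k} \<Longrightarrow> act B C lab (root C k c) (map (\<lambda>i. (dface B i (lab c), False)) xs) = Some (root C k c)"
proof (induction xs)
  case Nil then show ?case by simp
next
  case (Cons i xs)
  have i: "1 \<le> i" "i \<le> k" using Cons.prems by auto
  have f: "dface C i c \<in> dcells C (k - 1)" using dface_in_dcells[OF dcomplex_C _ c i(2)] k by simp
  have l: "lab (dface C i c) = dface B i (lab c)" using lab_dface[OF c i(2)] k by simp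
  have r: "root C (k - 1) (dface C i c) = root C k c" using root_dface[OF dcomplex_C c i] .
  have "step B C lab (root C k c) (dface B i (lab c), False) = Some (root C k c)"
    using step_Pcell_root[OF f, of False] l r k by simp
  then show ?case using Cons by (simp add: act_Cons)
qed

lemma act_bl_root_triangle:
  assumes c: "c \<in> dcells C 2"
  shows "act B C lab (root C 2 c) (bl B (lab c)) = Some (root C 2 c)"
proof -
  have e: "dface C 2 c \<in> dcells C 1" "dface C 1 c \<in> dcells C 1" "dface C 0 c \<in> dcells C 1"
    using dface_in_dcells[OF dcomplex_C _ c] by auto
  have lf: "\<And>i. i \<le> 2 \<Longrightarrow> lab (dface C i c) = dface B i (lab c)"
    using lab_dface[OF c] by simp
  have id: "dface C 0 (dface C 2 c) = dface C 1 (dface C 0 c)"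
    "dface C 0 (dface C 1 c) = dface C 0 (dface C 0 c)"
    "dface C 1 (dface C 2 c) = dface C 1 (dface C 1 c)"
    using dface_dface[OF dcomplex_C _ c, of 0 2] dface_dface[OF dcomplex_C _ c, of 0 1]
      dface_dface[OF dcomplex_C _ c, of 1 2] by simp_all
  have rt: "root C 2 c = dface C 1 (dface C 2 c)" by (simp add: root_def numeral_2_eq_2)
  have "step B C lab (root C 2 c) (dface B 2 (lab c), False) = Some (dface C 0 (dface C 2 c))"
    using step_edge_forward[OF e(1)] lf[of 2] rt by simp
  moreover have "step B C lab (dface C 0 (dface C 2 c)) (dface B 0 (lab c), False) = Some (dface C 0 (dface C 0 c))"
    using step_edge_forward[OF e(3)] lf[of 0] id(1) by simp
  moreover have "step B C lab (dface C 0 (dface C 0 c)) (dface B 1 (lab c), True) = Some (root C 2 c)"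
    using step_edge_backward[OF e(2)] lf[of 1] id(2,3) rt by simp
  ultimately show ?thesis by (simp add: bl_eq[OF lab_cell[OF c]] act_Cons)
qed

lemma act_bl_root_ge3:
  assumes c: "c \<in> dcells C k" and k: "3 \<le> k"
  shows "act B C lab (root C k c) (bl B (lab c)) = Some (root C k c)"
proof -
  define M where "M = map (\<lambda>i. (dface B i (lab c), False)) (rev [1..<Suc k])"
  have bl: "bl B (lab c) = M @ [(edge01 B k (lab c), False), (dface B 0 (lab c), False), (edge01 B k (lab c), True)]"
    using k by (simp add: bl_eq[OF lab_cell[OF c]] M_def)
  have "act B C lab (root C k c) M = Some (root C k c)"
    unfolding M_def by (rule act_faces_root[OF c k]) auto
  moreover have e: "edge01 C k c \<in> dcells C 1" "dface C 1 (edge01 C k c) = root C k c"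
    "dface C 0 (edge01 C k c) = vert C k 1 c"
    using edge01_faces[OF dcomplex_C c] k by auto
  moreover have lab_e: "lab (edge01 C k c) = edge01 B k (lab c)"
    using dmorphism_edge01[OF dcomplex_C dmorphism_lab c] k by simp
  moreover have "step B C lab (vert C k 1 c) (dface B 0 (lab c), False) = Some (vert C k 1 c)"
    using step_Pcell_root[OF dface_in_dcells[OF dcomplex_C _ c, of 0], of False]
      root_dface0[OF dcomplex_C c] lab_dface[OF c, of 0] k by simp
  ultimately show ?thesis
    using step_edge_forward[OF e(1)] step_edge_backward[OF e(1)] unfolding bl
    by (simp add: act_append act_Cons)
qed

lemma act_bl_root:
  assumes "c \<in> dcells C k" and "2 \<le> k"
  shows "act B C lab (root C k c) (bl B (lab c)) = Some (root C k c)"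
  using assms act_bl_root_triangle act_bl_root_ge3 by (cases "k = 2") auto

lemma step_Pletter:
  assumes "\<rho> \<in> Pset B" and "step B C lab v (\<rho>, b) = Some y"
  shows "y = v \<and> (\<exists>k c. c \<in> dcells C k \<and> lab c = \<rho> \<and> root C k c = v)"
  using assms Xset_Pset_disjoint step_eq_Some_iff unfolding moves_def by fastforce

lemma act_mcong: "mcong B u w \<Longrightarrow> act B C lab v u = act B C lab v w"
proof (induction arbitrary: v rule: mcong.induct)
  case (refl w) then show ?case by simp
next
  case (sym u v) then show ?case by simp
next
  case (trans u v w) then show ?case by simp
next
  case (cong u u' v v') then show ?case by (simp add: act_append split: option.split)
next
  case (inv1 w)
  show ?case
  proof (cases "act B C lab v w")
    case None then show ?thesis by (simp add: act_append)
  next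
    case (Some y) then show ?thesis using act_winv[OF Some] by (simp add: act_append)
  qed
next
  case (inv2 u w)
  then show ?case using act_wwinv_prefix[of v u "w @ winv w"] act_wwinv_prefix[of v w "u @ winv u"]
      act_wwinv_prefix[of v u "[]"] act_wwinv_prefix[of v w "[]"]
    by (simp split: if_splits)
next
  case (idem \<rho>)
  show ?case
  proof (cases "step B C lab v (\<rho>, False)")
    case (Some y)
    then show ?thesis using step_Pletter[OF idem Some] by (simp add: act_Cons)
  qed (simp add: act_Cons)
next
  case (rel \<rho>)
  show ?case
  proof (cases "step B C lab v (\<rho>, False)")
    case (Some y)
    then obtain k c where c: "y = v" "c \<in> dcells C k" "lab c = \<rho>" "root C k c = v"
      using step_Pletter[OF rel] by blast
    then show ?thesis using Some act_bl_root[OF c(2) dim_P[OF c(2)]] rel by (simp add: act_Cons)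
  qed (simp add: act_Cons)
qed

lemma moves_vertex: "v \<in> dcells C 0 \<Longrightarrow> moves v x w \<Longrightarrow> w \<in> dcells C 0"
  unfolding moves_def using dface_in_dcells[OF dcomplex_C, of 1] by (fastforce split: prod.splits)

lemma act_vertex: "v \<in> dcells C 0 \<Longrightarrow> act B C lab v w = Some y \<Longrightarrow> y \<in> dcells C 0"
proof (induction w arbitrary: v)
  case Nil then show ?case by simp
next
  case (Cons x w)
  obtain v1 where "step B C lab v x = Some v1" "act B C lab v1 w = Some y"
    using Cons.prems by (auto simp: act_Cons split: option.splits)
  then show ?case using Cons moves_vertex step_eq_Some_iff by blast
qed

lemma cls_in_loopmon_iff: "w \<in> words B \<Longrightarrow> cls w \<in> loopmon B C lab v \<longleftrightarrow> act B C lab v w = Some v"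
proof -
  assume w: "w \<in> words B"
  have "(\<exists>w'\<in>cls w. act B C lab v w' = Some v) \<longleftrightarrow> act B C lab v w = Some v"
  proof
    assume "\<exists>w'\<in>cls w. act B C lab v w' = Some v"
    then obtain w' where "w' \<in> cls w" "act B C lab v w' = Some v" by blast
    then show "act B C lab v w = Some v" using act_mcong in_cls_iff by metis
  next
    assume "act B C lab v w = Some v" then show "\<exists>w'\<in>cls w. act B C lab v w' = Some v" using cls_self[OF w] by blast
  qed
  then show ?thesis unfolding loopmon_def using cls_in_Mcar[OF w] by simp
qed

lemma loopmon_subset_Mcar: "loopmon B C lab v \<subseteq> Mcar B" unfolding loopmon_def by blast

lemma loopmonE: "m \<in> loopmon B C lab v \<Longrightarrow>
    (\<And>w. w \<in> words B \<Longrightarrow> m = cls w \<Longrightarrow> act B C lab v w = Some v \<Longrightarrow> P) \<Longrightarrow> P"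
proof -
  assume m: "m \<in> loopmon B C lab v"
    and h: "\<And>w. w \<in> words B \<Longrightarrow> m = cls w \<Longrightarrow> act B C lab v w = Some v \<Longrightarrow> P"
  have "m \<in> Mcar B" using m loopmon_subset_Mcar by blast
  then obtain w where w: "w \<in> words B" "m = cls w" by (rule McarE)
  then show P using h m cls_in_loopmon_iff by blast
qed

lemma dconnected_path:
  assumes con: "dconnected C" and v: "v \<in> dcells C 0" and x: "x \<in> dcells C 0"
  shows "\<exists>p\<in>words B. act B C lab v p = Some x"
proof -
  let ?R = "\<lambda>a b. \<exists>e\<in>dcells C 1. (dface C 1 e = a \<and> dface C 0 e = b) \<or> (dface C 1 e = b \<and> dface C 0 e = a)"
  have r: "?R\<^sup>*\<^sup>* v x" using con v x unfolding dconnected_def by blast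
  then show ?thesis
  proof (induction rule: rtranclp_induct)
    case base then show ?case using words_Nil by (metis act_Nil)
  next
    case (step y z)
    then obtain p where p: "p \<in> words B" "act B C lab v p = Some y" by blast
    from step(2) obtain e where e: "e \<in> dcells C 1"
      and d: "(dface C 1 e = y \<and> dface C 0 e = z) \<or> (dface C 1 e = z \<and> dface C 0 e = y)" by blast
    have lx: "lab e \<in> Xset B" using lab_X[OF e] .
    show ?case
    proof (cases "dface C 1 e = y \<and> dface C 0 e = z")
      case True
      have "act B C lab v (p @ [(lab e, False)]) = Some z" using p step_edge_forward[OF e] True by (simp add: act_snoc)
      then show ?thesis using p lx by (intro bexI[of _ "p @ [(lab e, False)]"]) auto
    next
      case False
      then have F: "dface C 1 e = z" "dface C 0 e = y" using d by auto
      have "act B C lab v (p @ [(lab e, True)]) = Some z" using p step_edge_backward[OF e] F by (simp add: act_snoc)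
      then show ?thesis using p lx by (intro bexI[of _ "p @ [(lab e, True)]"]) auto
    qed
  qed
qed

lemma act_words: "act B C lab v w = Some y \<Longrightarrow> w \<in> words B"
proof (induction w arbitrary: v)
  case Nil then show ?case by simp
next
  case (Cons x w)
  obtain a b where x: "x = (a, b)" by (cases x)
  obtain v1 where s: "step B C lab v x = Some v1" and r: "act B C lab v1 w = Some y"
    using Cons.prems by (auto simp: act_Cons split: option.splits)
  have "moves v x v1" using s step_eq_Some_iff by blast
  then have "a \<in> Xset B \<union> Pset B" using x by (auto simp: moves_def)
  moreover have "w \<in> words B" using Cons.IH[OF r] .
  ultimately show ?case using x by (simp add: words_Cons)
qed

lemma root_vertex: "c \<in> dcells C k \<Longrightarrow> root C k c \<in> dcells C 0" using root_in_dcells0[OF dcomplex_C] .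

lemma act_edge01: "c \<in> dcells C k \<Longrightarrow> 1 \<le> k \<Longrightarrow>
   act B C lab (root C k c) [(lab (edge01 C k c), False)] = Some (vert C k 1 c)"
  using edge01_faces[OF dcomplex_C] step_edge_forward act_single by metis


lemma loopmon_inv_submonoid:
  assumes "loopmon B C lab v \<subseteq> S"
  shows "inv_submonoid B S (loopmon B C lab v)"
  unfolding inv_submonoid_def
proof (intro conjI ballI)
  show "mone B \<in> loopmon B C lab v" using cls_in_loopmon_iff[of "[]"] by (simp add: mone_cls)
next
  fix a b assume "a \<in> loopmon B C lab v" "b \<in> loopmon B C lab v"
  then obtain u w where "u \<in> words B" "a = cls u" "act B C lab v u = Some v"
    and "w \<in> words B" "b = cls w" "act B C lab v w = Some v"
    by (metis loopmonE)
  then show "mmul B a b \<in> loopmon B C lab v"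
    using mmul_cls cls_in_loopmon_iff by (simp add: act_append)
next
  fix a assume "a \<in> loopmon B C lab v"
  then obtain u where "u \<in> words B" "a = cls u" "act B C lab v u = Some v" by (rule loopmonE)
  then show "minv B a \<in> loopmon B C lab v"
    using act_winv minv_cls cls_in_loopmon_iff by simp
qed (use assms in blast)

text \<open>If e m fixes v for an idempotent e, then e alone fixes v (reading e e gives the same
  vertex as reading e, and the action is injective), hence so does m.\<close>

lemma loopmon_upward_closed:
  assumes nm: "mleq B n m" and n: "n \<in> loopmon B C lab v"
  shows "m \<in> loopmon B C lab v"
proof -
  obtain e where e: "midem B e" "n = mmul B e m" and m: "m \<in> Mcar B"
    using nm unfolding mleq_def by blast
  obtain t where t: "t \<in> words B" "e = cls t" using e(1) unfolding midem_def by (meson McarE)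
  obtain s where s: "s \<in> words B" "m = cls s" using m by (rule McarE)
  have "cls (t @ t) = cls t" using e(1) t mmul_cls unfolding midem_def by simp
  then have tt: "mcong B (t @ t) t" using cls_eq_iff t by simp
  have "act B C lab v (t @ s) = Some v" using n e(2) t s mmul_cls cls_in_loopmon_iff by simp
  then obtain z where z: "act B C lab v t = Some z" "act B C lab z s = Some v"
    using act_prefix by blast
  have "act B C lab z t = Some z" using act_mcong[OF tt, of v] z by (simp add: act_append)
  then have "v = z" using act_inj z(1) by blast
  then show ?thesis using z s cls_in_loopmon_iff by simp
qed

lemma closed_inv_submonoid_loopmon:
  assumes "loopmon B C lab v \<subseteq> S"
  shows "closed_inv_submonoid B S (loopmon B C lab v)"
proof -
  have "mleq B m m" if "m \<in> loopmon B C lab v" for m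
    using that mleq_cls[OF wle_refl] by (metis loopmonE)
  then show ?thesis
    unfolding closed_inv_submonoid_def
    using loopmon_inv_submonoid[OF assms] loopmon_upward_closed assms by blast
qed

lemma loopmon_act_conj:
  assumes p: "act B C lab v p = Some w" and s: "s \<in> words B"
  shows "cls s \<in> loopmon B C lab w \<longleftrightarrow> cls (p @ s @ winv p) \<in> loopmon B C lab v"
proof -
  have pw: "p \<in> words B" using act_words[OF p] .
  have pinv: "act B C lab w (winv p) = Some v" using act_winv[OF p] .
  have "act B C lab w s = Some w \<longleftrightarrow> act B C lab v (p @ s @ winv p) = Some v"
  proof
    assume "act B C lab w s = Some w"
    then show "act B C lab v (p @ s @ winv p) = Some v" using p pinv by (simp add: act_append)
  next
    assume "act B C lab v (p @ s @ winv p) = Some v"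
    then obtain w' where "act B C lab w s = Some w'" "act B C lab w' (winv p) = Some v"
      using p by (auto simp: act_append split: option.splits)
    then show "act B C lab w s = Some w" using act_inj pinv by metis
  qed
  then show ?thesis using cls_in_loopmon_iff s pw by simp
qed

abbreviation adj :: "'c \<Rightarrow> 'c \<Rightarrow> bool" where
  "adj \<equiv> (\<lambda>a b. \<exists>e\<in>dcells C 1. (dface C 1 e = a \<and> dface C 0 e = b) \<or> (dface C 1 e = b \<and> dface C 0 e = a))"

lemma adj_sym: "adj\<^sup>*\<^sup>* a b \<Longrightarrow> adj\<^sup>*\<^sup>* b a"
proof (induction rule: rtranclp_induct)
  case base then show ?case by simp
next
  case (step y z)
  have "adj z y" using step(2) by blast
  then show ?case using step(3) by (rule converse_rtranclp_into_rtranclp)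
qed

lemma act_adj_path: "act B C lab v p = Some y \<Longrightarrow> adj\<^sup>*\<^sup>* v y"
proof (induction p arbitrary: v)
  case Nil then show ?case by simp
next
  case (Cons x p)
  obtain v1 where s: "step B C lab v x = Some v1" and r: "act B C lab v1 p = Some y"
    using Cons.prems by (auto simp: act_Cons split: option.splits)
  have "moves v x v1" using s step_eq_Some_iff by blast
  obtain a b where x: "x = (a, b)" by (cases x)
  have "v1 = v \<or> adj v v1"
  proof -
    have "(a \<in> Xset B \<and> \<not> b \<and> (\<exists>e\<in>dcells C 1. lab e = a \<and> dface C 1 e = v \<and> dface C 0 e = v1)) \<or>
     (a \<in> Xset B \<and> b \<and> (\<exists>e\<in>dcells C 1. lab e = a \<and> dface C 0 e = v \<and> dface C 1 e = v1)) \<or>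
     (a \<in> Pset B \<and> v1 = v \<and> (\<exists>k c. c \<in> dcells C k \<and> lab c = a \<and> root C k c = v))"
      using \<open>moves v x v1\<close> x unfolding moves_def by simp
    then show ?thesis by blast
  qed
  then show ?case
  proof
    assume "v1 = v" then show ?case using Cons.IH[OF r] by simp
  next
    assume "adj v v1" then show ?case using Cons.IH[OF r] by (rule converse_rtranclp_into_rtranclp)
  qed
qed

lemma dconnected_from: assumes "v \<in> dcells C 0" "\<forall>x\<in>dcells C 0. adj\<^sup>*\<^sup>* v x" shows "dconnected C"
  unfolding dconnected_def
proof (intro ballI)
  fix a b assume "a \<in> dcells C 0" "b \<in> dcells C 0"
  then have "adj\<^sup>*\<^sup>* a v" "adj\<^sup>*\<^sup>* v b" using assms(2) adj_sym by blast+
  then show "adj\<^sup>*\<^sup>* a b" by (rule rtranclp_trans)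
qed

end

locale labeled_morphism = base_complex B + C: labeled_complex B C labC + D: labeled_complex B D labD
  for B :: "'l dcx" and C :: "'c dcx" and labC and D :: "'d dcx" and labD +
  fixes f :: "'c \<Rightarrow> 'd"
  assumes morphism: "dmorphism C D f" and lab_preserved: "\<And>k c. c \<in> dcells C k \<Longrightarrow> labD (f c) = labC c"
begin

lemma moves_image: "C.moves v x w \<Longrightarrow> D.moves (f v) x (f w)"
proof -
  assume s: "C.moves v x w"
  obtain a b where x: "x = (a, b)" by (cases x)
  show ?thesis
  proof (cases "a \<in> Xset B")
    case True
    then obtain e where e: "e \<in> dcells C 1" "labC e = a"
      "(\<not> b \<and> dface C 1 e = v \<and> dface C 0 e = w) \<or> (b \<and> dface C 0 e = v \<and> dface C 1 e = w)"
      using s x Xset_Pset_disjoint unfolding C.moves_def by auto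
    have fe: "f e \<in> dcells D 1" "labD (f e) = a" "f (dface C 1 e) = dface D 1 (f e)" "f (dface C 0 e) = dface D 0 (f e)"
      using dmorphism_cell[OF morphism e(1)] lab_preserved[OF e(1)] e(2) dmorphism_dface[OF morphism e(1)] by auto
    show ?thesis using e fe True x unfolding D.moves_def by auto
  next
    case False
    then obtain k c where c: "a \<in> Pset B" "w = v" "c \<in> dcells C k" "labC c = a" "root C k c = v"
      using s x unfolding C.moves_def by auto
    have "f c \<in> dcells D k" "labD (f c) = a" "root D k (f c) = f v"
      using dmorphism_cell[OF morphism c(3)] lab_preserved[OF c(3)] c dmorphism_root[OF C.dcomplex_C morphism c(3)] by auto
    then show ?thesis using c x unfolding D.moves_def by auto
  qed
qed

lemma act_image: "act B C labC v w = Some y \<Longrightarrow> act B D labD (f v) w = Some (f y)"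
proof (induction w arbitrary: v)
  case Nil then show ?case by simp
next
  case (Cons x w)
  obtain v1 where s: "step B C labC v x = Some v1" and r: "act B C labC v1 w = Some y"
    using Cons.prems by (auto simp: C.act_Cons split: option.splits)
  have "step B D labD (f v) x = Some (f v1)" using moves_image s C.step_eq_Some_iff D.step_eq_Some_iff by blast
  then show ?case using Cons.IH[OF r] by (simp add: D.act_Cons)
qed

lemma loopmon_image_subset: "loopmon B C labC v \<subseteq> loopmon B D labD (f v)"
proof
  fix m assume m: "m \<in> loopmon B C labC v"
  then obtain w where w: "w \<in> words B" "m = cls w" "act B C labC v w = Some v" by (rule C.loopmonE)
  then show "m \<in> loopmon B D labD (f v)" using act_image D.cls_in_loopmon_iff by auto
qed

end

lemma labeled_complexI: "is_base B \<Longrightarrow> labeled B C lab \<Longrightarrow> labeled_complex B C lab"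
  unfolding labeled_complex_def labeled_complex_axioms_def base_complex_def by blast

lemma labeled_morphismI:
  assumes "is_base B" "labeled B C labC" "labeled B D labD" "lab_immersion C labC D labD f"
  shows "labeled_morphism B C labC D labD f"
  using assms immersion_dmorphism
  unfolding labeled_morphism_def labeled_morphism_axioms_def labeled_complex_def
    labeled_complex_axioms_def base_complex_def lab_immersion_def by metis

theorem loopmon_immersion:
  assumes "is_base B" "labeled B C labC" "labeled B D labD" "lab_immersion D labD C labC f"
  shows "loopmon B D labD v \<subseteq> loopmon B C labC (f v) \<and>
    closed_inv_submonoid B (loopmon B C labC (f v)) (loopmon B D labD v)"
proof -
  interpret labeled_morphism B D labD C labC f
    using labeled_morphismI[OF assms(1,3,2,4)] .
  show ?thesis using loopmon_image_subset C.closed_inv_submonoid_loopmon by blast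
qed


section \<open>Uniqueness of realizations\<close>

locale equal_loopmons = base_complex B + D1: labeled_complex B D1 lab1 + D2: labeled_complex B D2 lab2
  for B :: "'l dcx" and D1 :: "'a dcx" and lab1 and D2 :: "'b dcx" and lab2 +
  fixes v1 v2
  assumes v1: "v1 \<in> dcells D1 0" and v2: "v2 \<in> dcells D2 0"
    and con1: "dconnected D1" and con2: "dconnected D2"
    and L: "loopmon B D1 lab1 v1 = loopmon B D2 lab2 v2"
begin

definition corresp where "corresp x y \<longleftrightarrow> (\<exists>p\<in>words B. act B D1 lab1 v1 p = Some x \<and> act B D2 lab2 v2 p = Some y)"

lemma loop_transfer: "p \<in> words B \<Longrightarrow> act B D1 lab1 v1 p = Some v1 \<Longrightarrow> act B D2 lab2 v2 p = Some v2"
  using D1.cls_in_loopmon_iff D2.cls_in_loopmon_iff L by blast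

lemma act_transfer: assumes a: "act B D1 lab1 v1 p = Some x" shows "\<exists>y. act B D2 lab2 v2 p = Some y"
proof -
  have p: "p \<in> words B" using D1.act_words[OF a] .
  have "act B D1 lab1 v1 (p @ winv p) = Some v1" using a D1.act_winv[OF a] by (simp add: D1.act_append)
  then have "act B D2 lab2 v2 (p @ winv p) = Some v2" using loop_transfer p by simp
  then show ?thesis using D2.act_prefix by blast
qed

lemma corresp_unique: assumes a: "corresp x y1" and b: "corresp x y2" shows "y1 = y2"
proof -
  obtain p where p: "p \<in> words B" "act B D1 lab1 v1 p = Some x" "act B D2 lab2 v2 p = Some y1"
    using a unfolding corresp_def by blast
  obtain q where q: "q \<in> words B" "act B D1 lab1 v1 q = Some x" "act B D2 lab2 v2 q = Some y2"
    using b unfolding corresp_def by blast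
  have "act B D1 lab1 v1 (p @ winv q) = Some v1" using p q D1.act_winv[OF q(2)] by (simp add: D1.act_append)
  then have "act B D2 lab2 v2 (p @ winv q) = Some v2" using loop_transfer p q by simp
  then have "act B D2 lab2 y1 (winv q) = Some v2" using p by (simp add: D2.act_append)
  moreover have "act B D2 lab2 y2 (winv q) = Some v2" using D2.act_winv[OF q(3)] .
  ultimately show ?thesis using D2.act_inj by blast
qed

lemma corresp_total: assumes x: "x \<in> dcells D1 0" shows "\<exists>y. corresp x y"
proof -
  obtain p where p: "p \<in> words B" "act B D1 lab1 v1 p = Some x" using D1.dconnected_path[OF con1 v1 x] by blast
  then show ?thesis using act_transfer unfolding corresp_def by blast
qed

lemma corresp_vertex: "corresp x y \<Longrightarrow> x \<in> dcells D1 0 \<and> y \<in> dcells D2 0"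
  unfolding corresp_def using D1.act_vertex[OF v1] D2.act_vertex[OF v2] by blast

definition hvert where "hvert x = (THE y. corresp x y)"

lemma hvert_eq: "corresp x y \<Longrightarrow> hvert x = y"
  unfolding hvert_def using corresp_unique by blast

lemma hvert: "x \<in> dcells D1 0 \<Longrightarrow> corresp x (hvert x)"
  using corresp_total hvert_eq by metis

lemma hvert_vertex: "x \<in> dcells D1 0 \<Longrightarrow> hvert x \<in> dcells D2 0"
  using hvert corresp_vertex by blast

lemma hvert_base: "hvert v1 = v2"
proof -
  have "corresp v1 v2" unfolding corresp_def by (intro bexI[of _ "[]"]) auto
  then show ?thesis by (rule hvert_eq)
qed

lemma act_hvert: assumes x: "x \<in> dcells D1 0" and a: "act B D1 lab1 x w = Some x'"
  shows "act B D2 lab2 (hvert x) w = Some (hvert x')"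
proof -
  obtain p where p: "p \<in> words B" "act B D1 lab1 v1 p = Some x" "act B D2 lab2 v2 p = Some (hvert x)"
    using hvert[OF x] unfolding corresp_def by blast
  have w: "w \<in> words B" using D1.act_words[OF a] .
  have "act B D1 lab1 v1 (p @ w) = Some x'" using p a by (simp add: D1.act_append)
  then obtain y' where y': "act B D2 lab2 v2 (p @ w) = Some y'" using act_transfer by blast
  then have "corresp x' y'" using p w \<open>act B D1 lab1 v1 (p @ w) = Some x'\<close> unfolding corresp_def by auto
  then have "hvert x' = y'" by (rule hvert_eq)
  then show ?thesis using y' p by (simp add: D2.act_append)
qed

lemma lab_vertices: "x \<in> dcells D1 0 \<Longrightarrow> y \<in> dcells D2 0 \<Longrightarrow> lab2 y = lab1 x"
proof -
  assume a: "x \<in> dcells D1 0" "y \<in> dcells D2 0"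
  obtain z where "dcells B 0 = {z}" using base unfolding is_base_def by blast
  then show ?thesis using D1.lab_cell[OF a(1)] D2.lab_cell[OF a(2)] by auto
qed

lemma moves_hvert:
  assumes x: "x \<in> dcells D1 0" and m: "D1.moves x l y"
  shows "D2.moves (hvert x) l (hvert y)"
proof -
  have "act B D1 lab1 x [l] = Some y" using m D1.step_eq_Some_iff D1.act_single by simp
  then have "act B D2 lab2 (hvert x) [l] = Some (hvert y)" by (rule act_hvert[OF x])
  then show ?thesis using D2.step_eq_Some_iff D2.act_single by simp
qed

lemma hcell_exists:
  assumes c: "c \<in> dcells D1 k"
  shows "\<exists>c'. c' \<in> dcells D2 k \<and> lab2 c' = lab1 c \<and> root D2 k c' = hvert (root D1 k c)"
proof -
  have rx: "root D1 k c \<in> dcells D1 0" using D1.root_vertex[OF c] .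
  consider "k = 0" | "k = 1" | "2 \<le> k" by linarith
  then show ?thesis
  proof cases
    case 1
    then show ?thesis using c hvert_vertex lab_vertices by (intro exI[of _ "hvert c"]) auto
  next
    case 2
    have "D1.moves (root D1 k c) (lab1 c, False) (dface D1 0 c)"
      using c 2 D1.lab_X unfolding D1.moves_def by (auto simp: root_def)
    then have "D2.moves (hvert (root D1 k c)) (lab1 c, False) (hvert (dface D1 0 c))"
      using moves_hvert[OF rx] by blast
    then obtain e' where "e' \<in> dcells D2 1" "lab2 e' = lab1 c" "dface D2 1 e' = hvert (root D1 k c)"
      using D1.lab_X[of c] c 2 Xset_Pset_disjoint unfolding D2.moves_def by auto
    then show ?thesis using 2 by (intro exI[of _ e']) (simp add: root_def)
  next
    case 3
    have P: "lab1 c \<in> Pset B" using D1.lab_P[OF c 3] .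
    then have "D1.moves (root D1 k c) (lab1 c, False) (root D1 k c)"
      using c unfolding D1.moves_def by auto
    then have "D2.moves (hvert (root D1 k c)) (lab1 c, False) (hvert (root D1 k c))"
      using moves_hvert[OF rx] by blast
    then obtain k' c' where c': "c' \<in> dcells D2 k'" "lab2 c' = lab1 c" "root D2 k' c' = hvert (root D1 k c)"
      using P Xset_Pset_disjoint unfolding D2.moves_def by auto
    have "k' = k" using D1.lab_cell[OF c] D2.lab_cell[OF c'(1)] c'(2) dcells_disjoint[OF dcomplex_B] by metis
    then show ?thesis using c' by blast
  qed
qed

definition hcell where
  "hcell c = (THE c'. \<exists>k. c \<in> dcells D1 k \<and> c' \<in> dcells D2 k \<and> lab2 c' = lab1 c \<and>
     root D2 k c' = hvert (root D1 k c))"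

lemma hcell_eqI:
  assumes c: "c \<in> dcells D1 k" and c': "c' \<in> dcells D2 k" "lab2 c' = lab1 c"
    "root D2 k c' = hvert (root D1 k c)"
  shows "hcell c = c'"
  unfolding hcell_def
proof (rule the_equality)
  fix c'' assume "\<exists>k'. c \<in> dcells D1 k' \<and> c'' \<in> dcells D2 k' \<and> lab2 c'' = lab1 c \<and>
     root D2 k' c'' = hvert (root D1 k' c)"
  then show "c'' = c'"
    using c c' dcells_disjoint[OF D1.dcomplex_C] D2.root_uniq[of c'' k c' k] by metis
qed (use c c' in blast)

lemma hcell:
  assumes c: "c \<in> dcells D1 k"
  shows "hcell c \<in> dcells D2 k \<and> lab2 (hcell c) = lab1 c \<and> root D2 k (hcell c) = hvert (root D1 k c)"
  using hcell_exists[OF c] hcell_eqI[OF c] by metis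

lemma hcell_vertex: "x \<in> dcells D1 0 \<Longrightarrow> hcell x = hvert x"
  using hcell[of x 0] by simp

lemma hvert_vert1:
  assumes c: "c \<in> dcells D1 k" and k: "1 \<le> k"
  shows "hvert (vert D1 k 1 c) = vert D2 k 1 (hcell c)"
proof -
  have h: "hcell c \<in> dcells D2 k" "lab2 (hcell c) = lab1 c" "root D2 k (hcell c) = hvert (root D1 k c)"
    using hcell[OF c] by auto
  have "lab2 (edge01 D2 k (hcell c)) = lab1 (edge01 D1 k c)"
    using dmorphism_edge01[OF D2.dcomplex_C D2.dmorphism_lab h(1) k]
      dmorphism_edge01[OF D1.dcomplex_C D1.dmorphism_lab c k] h(2) by simp
  then have "act B D2 lab2 (hvert (root D1 k c)) [(lab1 (edge01 D1 k c), False)] = Some (vert D2 k 1 (hcell c))"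
    using D2.act_edge01[OF h(1) k] h(3) by simp
  moreover have "act B D2 lab2 (hvert (root D1 k c)) [(lab1 (edge01 D1 k c), False)] = Some (hvert (vert D1 k 1 c))"
    using act_hvert[OF D1.root_vertex[OF c] D1.act_edge01[OF c k]] .
  ultimately show ?thesis by simp
qed

lemma hcell_dface:
  assumes c: "c \<in> dcells D1 k" and k: "1 \<le> k" and i: "i \<le> k"
  shows "hcell (dface D1 i c) = dface D2 i (hcell c)"
proof (rule hcell_eqI)
  have h: "hcell c \<in> dcells D2 k" "lab2 (hcell c) = lab1 c" "root D2 k (hcell c) = hvert (root D1 k c)"
    using hcell[OF c] by auto
  show "dface D1 i c \<in> dcells D1 (k - 1)" using dface_in_dcells[OF D1.dcomplex_C k c i] .
  show "dface D2 i (hcell c) \<in> dcells D2 (k - 1)" using dface_in_dcells[OF D2.dcomplex_C k h(1) i] .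
  show "lab2 (dface D2 i (hcell c)) = lab1 (dface D1 i c)"
    using D2.lab_dface[OF h(1) i k] D1.lab_dface[OF c i k] h(2) by simp
  show "root D2 (k - 1) (dface D2 i (hcell c)) = hvert (root D1 (k - 1) (dface D1 i c))"
  proof (cases "i = 0")
    case False
    then show ?thesis
      using root_dface[OF D2.dcomplex_C h(1), of i] root_dface[OF D1.dcomplex_C c, of i] i h(3) by simp
  next
    case True
    then show ?thesis
      using root_dface0[OF D2.dcomplex_C h(1) k] root_dface0[OF D1.dcomplex_C c k] hvert_vert1[OF c k] by simp
  qed
qed

lemma hcell_bij: "bij_betw hcell (allcells D1) (allcells D2)"
proof -
  interpret sw: equal_loopmons B D2 lab2 D1 lab1 v2 v1
    by unfold_locales (use v1 v2 con1 con2 L D1.labC D2.labC in auto)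
  have sw_hvert: "sw.hvert (hvert x) = x" if "x \<in> dcells D1 0" for x
  proof (rule sw.hvert_eq)
    show "sw.corresp (hvert x) x" using hvert[OF that] unfolding corresp_def sw.corresp_def by blast
  qed
  have hvert_sw: "hvert (sw.hvert y) = y" if "y \<in> dcells D2 0" for y
  proof (rule hvert_eq)
    show "corresp (sw.hvert y) y" using sw.hvert[OF that] unfolding corresp_def sw.corresp_def by blast
  qed
  have left: "sw.hcell (hcell c) = c" if c: "c \<in> dcells D1 k" for c k
    using hcell[OF c] sw.hcell_eqI[of "hcell c" k c] c sw_hvert[OF D1.root_vertex[OF c]] by simp
  have right: "hcell (sw.hcell c') = c'" if c': "c' \<in> dcells D2 k" for c' k
    using sw.hcell[OF c'] hcell_eqI[of "sw.hcell c'" k c'] c' hvert_sw[OF D2.root_vertex[OF c']] by simp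
  show ?thesis
  proof (rule bij_betw_byWitness[where f'=sw.hcell])
    show "\<forall>c\<in>allcells D1. sw.hcell (hcell c) = c" using left unfolding allcells_def by blast
    show "\<forall>c'\<in>allcells D2. hcell (sw.hcell c') = c'" using right unfolding allcells_def by blast
    show "hcell ` allcells D1 \<subseteq> allcells D2" using hcell unfolding allcells_def by blast
    show "sw.hcell ` allcells D2 \<subseteq> allcells D1" using sw.hcell unfolding allcells_def by blast
  qed
qed

lemma hcell_dc_iso: "dc_iso D1 D2 hcell"
  unfolding dc_iso_def using hcell_bij hcell hcell_dface by blast

end

text \<open>Realizations of the same H are isomorphic: vertices correspond when they are reached from
  the base vertices by the same word, which is well defined because the loop monoids agree.\<close>

theorem realizations_isomorphic:
  assumes base: "is_base B" and lC: "labeled B C labC"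
    and r1: "realizes B C labC u H D1 lab1 f1 v1" and r2: "realizes B C labC u H D2 lab2 f2 v2"
  shows "\<exists>h. dc_iso D1 D2 h \<and> h v1 = v2 \<and> (\<forall>k. \<forall>c\<in>dcells D1 k. f2 (h c) = f1 c \<and> lab2 (h c) = lab1 c)"
proof -
  have R1: "labeled B D1 lab1" "dconnected D1" "lab_immersion D1 lab1 C labC f1" "v1 \<in> dcells D1 0"
    "f1 v1 = u" "loopmon B D1 lab1 v1 = H" using r1 unfolding realizes_def by auto
  have R2: "labeled B D2 lab2" "dconnected D2" "lab_immersion D2 lab2 C labC f2" "v2 \<in> dcells D2 0"
    "f2 v2 = u" "loopmon B D2 lab2 v2 = H" using r2 unfolding realizes_def by auto
  interpret T: equal_loopmons B D1 lab1 D2 lab2 v1 v2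
    using labeled_complexI[OF base R1(1)] labeled_complexI[OF base R2(1)] R1 R2 base
    unfolding equal_loopmons_def equal_loopmons_axioms_def base_complex_def by auto
  interpret CC: labeled_complex B C labC using labeled_complexI[OF base lC] .
  interpret M1: labeled_morphism B D1 lab1 C labC f1 using labeled_morphismI[OF base R1(1) lC R1(3)] .
  interpret M2: labeled_morphism B D2 lab2 C labC f2 using labeled_morphismI[OF base R2(1) lC R2(3)] .
  have fvx: "f2 (T.hvert x) = f1 x" if x: "x \<in> dcells D1 0" for x
  proof -
    obtain p where p: "act B D1 lab1 v1 p = Some x" "act B D2 lab2 v2 p = Some (T.hvert x)"
      using T.hvert[OF x] unfolding T.corresp_def by blast
    show ?thesis using M1.act_image[OF p(1)] M2.act_image[OF p(2)] R1(5) R2(5) by simp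
  qed
  have "f2 (T.hcell c) = f1 c \<and> lab2 (T.hcell c) = lab1 c" if c: "c \<in> dcells D1 k" for k c
  proof -
    have h: "T.hcell c \<in> dcells D2 k" "lab2 (T.hcell c) = lab1 c" "root D2 k (T.hcell c) = T.hvert (root D1 k c)"
      using T.hcell[OF c] by auto
    have "labC (f2 (T.hcell c)) = labC (f1 c)" using M2.lab_preserved[OF h(1)] M1.lab_preserved[OF c] h(2) by simp
    moreover have "root C k (f2 (T.hcell c)) = root C k (f1 c)"
      using dmorphism_root[OF T.D2.dcomplex_C M2.morphism h(1)] dmorphism_root[OF T.D1.dcomplex_C M1.morphism c]
        h(3) fvx[OF T.D1.root_vertex[OF c]] by simp
    ultimately show ?thesis
      using CC.root_uniq[OF dmorphism_cell[OF M2.morphism h(1)] dmorphism_cell[OF M1.morphism c]] h(2) by simp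
  qed
  moreover have "T.hcell v1 = v2" using T.hcell_vertex[OF R1(4)] T.hvert_base by simp
  ultimately show ?thesis using T.hcell_dc_iso by blast
qed

section \<open>The complex D_H\<close>

text \<open>The relation \<rho> = \<rho> bl(\<rho>) puts the letter \<rho> below the letters of the faces of a cell
  labeled \<rho> and below the loop e(c) e(d_0 c) e(d_1 c)\<inverse>; this is what makes the faces of a cell
  of D_H cells of D_H again.\<close>

context labeled_complex
begin

declare winv_Cons[simp]

abbreviation edge_letter :: "nat \<Rightarrow> 'c \<Rightarrow> 'l \<times> bool" where
  "edge_letter k c \<equiv> (lab (edge01 C k c), False)"

lemma wle_bl:
  assumes c: "c \<in> dcells C k" and k: "3 \<le> k"
  shows "\<And>i. 1 \<le> i \<Longrightarrow> i \<le> k \<Longrightarrow> wle [(lab c, False)] [(lab (dface C i c), False)]"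
    and "wle [(lab c, False)] ([edge_letter k c] @ [(lab (dface C 0 c), False)] @ winv [edge_letter k c])"
proof -
  have lc: "lab c \<in> dcells B k" using lab_cell[OF c] .
  have P: "lab c \<in> Pset B" using lab_P[OF c] k by simp
  have lf: "\<And>i. i \<le> k \<Longrightarrow> lab (dface C i c) = dface B i (lab c)" using lab_dface[OF c] k by simp
  have fP: "\<And>i. i \<le> k \<Longrightarrow> lab (dface C i c) \<in> Pset B"
    using lab_P[OF dface_in_dcells[OF dcomplex_C _ c]] k by simp
  have le_e: "lab (edge01 C k c) = edge01 B k (lab c)" using dmorphism_edge01[OF dcomplex_C dmorphism_lab c] k by simp
  have ex: "lab (edge01 C k c) \<in> Xset B" using lab_X edge01_faces[OF dcomplex_C c] k by simp
  define M where "M = map (\<lambda>i. (lab (dface C i c), False)) (rev [1..<Suc k])"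
  define T where "T = [edge_letter k c] @ [(lab (dface C 0 c), False)] @ winv [edge_letter k c]"
  have blM: "bl B (lab c) = M @ T"
  proof -
    have "map (\<lambda>i. (dface B i (lab c), False)) (rev [1..<Suc k]) = M"
      unfolding M_def using lf by auto
    then show ?thesis using k le_e lf[of 0] by (simp add: bl_eq[OF lc] T_def)
  qed
  have dM: "\<forall>x\<in>set M. idem_word [x]" unfolding M_def using fP idem_word_Pletter by auto
  have dT: "idem_word T" unfolding T_def using idem_word_conj[OF idem_word_Pletter[OF fP[of 0]], of "[edge_letter k c]"] ex by simp
  have "mcong B [(lab c, False)] ([(lab c, False)] @ bl B (lab c))" using mcong.rel[OF P] by simp
  then have lbl: "wle [(lab c, False)] (M @ T)" unfolding wle_def using idem_word_Pletter[OF P] blM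
    by (intro exI[of _ "[(lab c, False)]"]) simp
  have lM: "wle [(lab c, False)] M" using wle_trans[OF lbl wle_idem_appendL[OF idem_word_list[OF dM] dT]] .
  show "wle [(lab c, False)] T" using wle_trans[OF lbl wle_idem_appendR[OF idem_word_list[OF dM] dT]] .
  fix i assume i: "1 \<le> i" "i \<le> k"
  have "(lab (dface C i c), False) \<in> set M" unfolding M_def set_map
    using i by (intro imageI) (simp del: upt_Suc)
  then show "wle [(lab c, False)] [(lab (dface C i c), False)]"
    using wle_trans[OF lM wle_idem_list_mem[OF dM]] by blast
qed

lemma wle_triangle:
  "2 \<le> k \<Longrightarrow> c \<in> dcells C k \<Longrightarrow> wle [(lab c, False)]
     ([edge_letter k c] @ [edge_letter (k - 1) (dface C 0 c)] @ winv [edge_letter (k - 1) (dface C 1 c)])"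
proof (induction k arbitrary: c rule: nat_induct_at_least)
  case base
  have c: "c \<in> dcells C 2" using base .
  have lc: "lab c \<in> dcells B 2" using lab_cell[OF c] .
  have P: "lab c \<in> Pset B" using lab_P[OF c] by simp
  have lf: "\<And>i. i \<le> 2 \<Longrightarrow> lab (dface C i c) = dface B i (lab c)" using lab_dface[OF c] by simp
  have e2: "edge01 C 2 c = dface C 2 c" by (simp add: edge01_Suc numeral_2_eq_2)
  have "mcong B [(lab c, False)] ([(lab c, False)] @ bl B (lab c))" using mcong.rel[OF P] by simp
  then have "wle [(lab c, False)] (bl B (lab c))" unfolding wle_def using idem_word_Pletter[OF P]
    by (intro exI[of _ "[(lab c, False)]"]) simp
  moreover have "bl B (lab c) = [edge_letter 2 c] @ [edge_letter (2 - 1) (dface C 0 c)] @ winv [edge_letter (2 - 1) (dface C 1 c)]"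
    using lf[of 0] lf[of 1] lf[of 2] e2 by (simp add: bl_eq[OF lc])
  ultimately show ?case by simp
next
  case (Suc k)
  have c: "c \<in> dcells C (Suc k)" using Suc.prems .
  have k3: "3 \<le> Suc k" using Suc.hyps by simp
  have d: "dface C (Suc k) c \<in> dcells C k" using dface_in_dcells[OF dcomplex_C _ c] by simp
  have l1: "wle [(lab c, False)] [(lab (dface C (Suc k) c), False)]" using wle_bl(1)[OF c k3, of "Suc k"] by simp
  have IH: "wle [(lab (dface C (Suc k) c), False)]
     ([edge_letter k (dface C (Suc k) c)] @ [edge_letter (k - 1) (dface C 0 (dface C (Suc k) c))]
       @ winv [edge_letter (k - 1) (dface C 1 (dface C (Suc k) c))])"
    using Suc.IH[OF d] .
  have a1: "edge01 C k (dface C (Suc k) c) = edge01 C (Suc k) c" using edge01_dface[OF dcomplex_C c, of "Suc k"] Suc.hyps by simp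
  have id0: "dface C 0 (dface C (Suc k) c) = dface C k (dface C 0 c)" using dface_dface[OF dcomplex_C _ c, of 0 "Suc k"] Suc.hyps by simp
  have id1: "dface C 1 (dface C (Suc k) c) = dface C k (dface C 1 c)" using dface_dface[OF dcomplex_C _ c, of 1 "Suc k"] Suc.hyps by simp
  have d0: "dface C 0 c \<in> dcells C k" "dface C 1 c \<in> dcells C k" using dface_in_dcells[OF dcomplex_C _ c] by auto
  have a2: "edge01 C (k - 1) (dface C k (dface C 0 c)) = edge01 C k (dface C 0 c)"
    using edge01_dface[OF dcomplex_C d0(1), of k] Suc.hyps by simp
  have a3: "edge01 C (k - 1) (dface C k (dface C 1 c)) = edge01 C k (dface C 1 c)"
    using edge01_dface[OF dcomplex_C d0(2), of k] Suc.hyps by simp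
  show ?case using wle_trans[OF l1 IH] a1 a2 a3 id0 id1 by simp
qed

lemma wle_triangle_winv:
  assumes k: "2 \<le> k" and c: "c \<in> dcells C k"
  shows "wle [(lab c, False)] ([edge_letter (k - 1) (dface C 1 c)] @ winv [edge_letter (k - 1) (dface C 0 c)] @ winv [edge_letter k c])"
proof -
  have P: "lab c \<in> Pset B" using lab_P[OF c k] .
  have "wle (winv [(lab c, False)])
      (winv ([edge_letter k c] @ [edge_letter (k - 1) (dface C 0 c)] @ winv [edge_letter (k - 1) (dface C 1 c)]))"
    using wle_winv[OF wle_triangle[OF k c]] .
  then show ?thesis
    using wle_mcong[OF mcong_Pletter_inv[OF P] mcong.refl] wle_words by fastforce
qed

lemma wle_triangle_edges:
  assumes k: "2 \<le> k" and c: "c \<in> dcells C k"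
  shows "wle [(lab c, False)] (wwinv [edge_letter k c])"
    and "wle [(lab c, False)] (wwinv [edge_letter (k - 1) (dface C 1 c)])"
    and "wle [(lab c, False)] (wwinv [edge_letter k c, edge_letter (k - 1) (dface C 0 c)])"
proof -
  have e: "idem_word [(lab c, False)]" using idem_word_Pletter[OF lab_P[OF c k]] .
  show "wle [(lab c, False)] (wwinv [edge_letter k c])"
    using wle_wwinv_prefix[OF e, of "[edge_letter k c]"] wle_triangle[OF k c] by simp
  show "wle [(lab c, False)] (wwinv [edge_letter (k - 1) (dface C 1 c)])"
    using wle_wwinv_prefix[OF e, of "[edge_letter (k - 1) (dface C 1 c)]"] wle_triangle_winv[OF k c] by simp
  show "wle [(lab c, False)] (wwinv [edge_letter k c, edge_letter (k - 1) (dface C 0 c)])"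
    using wle_wwinv_prefix[OF e, of "[edge_letter k c, edge_letter (k - 1) (dface C 0 c)]"] wle_triangle[OF k c] by simp
qed

end

locale coset_complex = labeled_complex B C labC for B :: "'l dcx" and C :: "'c dcx" and labC +
  fixes u :: 'c and H :: "'l word set set"
  assumes u: "u \<in> dcells C 0"
    and Hc: "closed_inv_submonoid B (Mcar B) H" and HL: "H \<subseteq> loopmon B C labC u"
begin

abbreviation inH :: "'l word \<Rightarrow> bool" where "inH w \<equiv> cls w \<in> H"

lemma H_words: "inH w \<Longrightarrow> w \<in> words B"
  using closed_sub[OF Hc] cls_Mcar_words by blast
lemma H_one: "inH []" using closed_one[OF Hc] .
lemma H_mul: "inH a \<Longrightarrow> inH b \<Longrightarrow> inH (a @ b)" using closed_mul[OF Hc] H_words by blast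
lemma H_inv: "inH a \<Longrightarrow> inH (winv a)" using closed_inv[OF Hc] H_words by blast
lemma H_up: "inH a \<Longrightarrow> wle a b \<Longrightarrow> inH b"
  using closed_upward[OF Hc] wle_words cls_in_Mcar by blast
lemma H_up_conj: "inH (p @ a @ winv p) \<Longrightarrow> wle a b \<Longrightarrow> p \<in> words B \<Longrightarrow> inH (p @ b @ winv p)"
  using H_up wle_conj by blast

lemma H_cong: "inH a \<Longrightarrow> mcong B a b \<Longrightarrow> inH b" using closed_cong .

definition Hequiv :: "'l word \<Rightarrow> 'l word \<Rightarrow> bool" where "Hequiv p q \<longleftrightarrow> inH (p @ winv q)"
definition admissible :: "'l word \<Rightarrow> bool" where "admissible p \<longleftrightarrow> inH (p @ winv p)"

lemma admissible_Hequiv: "admissible p = Hequiv p p" by (simp add: admissible_def Hequiv_def)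
lemma admissible_words: "admissible p \<Longrightarrow> p \<in> words B" unfolding admissible_def using H_words[of "p @ winv p"] by simp
lemma Hequiv_words: "Hequiv p q \<Longrightarrow> p \<in> words B \<and> q \<in> words B" unfolding Hequiv_def using H_words[of "p @ winv q"] by simp

lemma H_conj: assumes e: "Hequiv q q'" and h: "inH (q' @ m @ winv q')" shows "inH (q @ m @ winv q)"
proof -
  have w: "q \<in> words B" "q' \<in> words B" "m \<in> words B" using H_words[OF h] Hequiv_words[OF e] by auto
  have a: "inH (q @ winv q' @ q' @ m @ winv q' @ q' @ winv q)"
    using H_mul[OF e[unfolded Hequiv_def] H_mul[OF h H_inv[OF e[unfolded Hequiv_def]]]] by simp
  have l1: "wle (q @ (winv q' @ q') @ (m @ winv q' @ q' @ winv q)) (q @ (m @ winv q' @ q' @ winv q))"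
    using wle_drop_idem[OF idem_word_wwinv[of "winv q'"], of q "m @ winv q' @ q' @ winv q"] w by (simp add: wwinv_def)
  have l2: "wle ((q @ m) @ (winv q' @ q') @ winv q) ((q @ m) @ winv q)"
    using wle_drop_idem[OF idem_word_wwinv[of "winv q'"], of "q @ m" "winv q"] w by (simp add: wwinv_def)
  show ?thesis using H_up[OF H_up[OF a] ] l1 l2 by simp
qed

lemma Hequiv_sym: "Hequiv p q \<Longrightarrow> Hequiv q p"
  unfolding Hequiv_def using H_inv by fastforce

lemma Hequiv_trans: assumes a: "Hequiv p q" and b: "Hequiv q r" shows "Hequiv p r"
proof -
  have w: "p \<in> words B" "q \<in> words B" "r \<in> words B" using Hequiv_words[OF a] Hequiv_words[OF b] by auto
  have "inH (p @ (winv q @ q) @ winv r)" using H_mul[OF a[unfolded Hequiv_def] b[unfolded Hequiv_def]] by simp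
  moreover have "wle (p @ (winv q @ q) @ winv r) (p @ winv r)"
    using wle_drop_idem[OF idem_word_wwinv[of "winv q"]] w by (simp add: wwinv_def)
  ultimately show ?thesis unfolding Hequiv_def using H_up by blast
qed

lemma Hequiv_admissible: "Hequiv p q \<Longrightarrow> admissible p"
  using Hequiv_trans Hequiv_sym admissible_Hequiv by blast

lemma admissible_prefix: assumes a: "admissible (p @ w)" shows "admissible p"
proof -
  have w: "p \<in> words B" "w \<in> words B" using admissible_words[OF a] by auto
  have "wle (p @ wwinv w @ winv p) (p @ winv p)" using wle_drop_idem[OF idem_word_wwinv[OF w(2)]] w by simp
  then show ?thesis using a H_up unfolding admissible_def wwinv_def by simp
qed

lemma Hequiv_append: assumes e: "Hequiv p q" and r: "admissible (p @ w)" shows "admissible (q @ w) \<and> Hequiv (p @ w) (q @ w)"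
proof -
  have w: "p \<in> words B" "q \<in> words B" "w \<in> words B" using Hequiv_words[OF e] admissible_words[OF r] by auto
  have "inH (p @ (w @ winv w) @ winv p)" using r unfolding admissible_def by simp
  then have "inH (q @ (w @ winv w) @ winv q)" using H_conj[OF Hequiv_sym[OF e]] by blast
  then have r2: "admissible (q @ w)" unfolding admissible_def by simp
  have "inH ((p @ w @ winv w) @ (winv p @ p) @ winv q)"
    using H_mul[OF r[unfolded admissible_def] e[unfolded Hequiv_def]] by simp
  moreover have "wle ((p @ w @ winv w) @ (winv p @ p) @ winv q) ((p @ w @ winv w) @ winv q)"
    using wle_drop_idem[OF idem_word_wwinv[of "winv p"], of "p @ w @ winv w" "winv q"] w by (simp add: wwinv_def)
  ultimately have "Hequiv (p @ w) (q @ w)" unfolding Hequiv_def using H_up by simp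
  then show ?thesis using r2 by simp
qed

lemma Hequiv_cancel: assumes e: "Hequiv (p @ w) (q @ w)" shows "Hequiv p q"
proof -
  have w: "p \<in> words B" "q \<in> words B" "w \<in> words B" using Hequiv_words[OF e] by auto
  have "wle (p @ wwinv w @ winv q) (p @ winv q)" using wle_drop_idem[OF idem_word_wwinv[OF w(3)]] w by simp
  then show ?thesis using e H_up unfolding Hequiv_def wwinv_def by simp
qed

lemma admissible_Hequiv_winv:
  assumes e: "Hequiv (p @ w) q"
  shows "admissible (q @ winv w)"
proof -
  have w: "p \<in> words B" "q \<in> words B" "w \<in> words B" using Hequiv_words[OF e] by auto
  have A: "inH (p @ w @ winv q)" using e unfolding Hequiv_def by simp
  have "inH ((q @ winv w) @ (winv p @ p) @ w @ winv q)"
    using H_mul[OF H_inv[OF A] A] by simp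
  moreover have "wle ((q @ winv w) @ (winv p @ p) @ w @ winv q) ((q @ winv w) @ w @ winv q)"
    using wle_drop_idem[OF idem_word_wwinv[of "winv p"], of "q @ winv w" "w @ winv q"] w
    by (simp add: wwinv_def)
  ultimately show ?thesis using H_up unfolding admissible_def by simp
qed

lemma admissible_wwinv_suffix:
  assumes r: "admissible (q @ w)"
  shows "admissible (q @ w @ winv w) \<and> Hequiv (q @ w @ winv w) q"
proof -
  have w: "q \<in> words B" "w \<in> words B" using admissible_words[OF r] by auto
  have "mcong B (q @ (w @ winv w @ w) @ winv w @ winv q) (q @ w @ winv w @ winv q)"
    using mcong_ctxt[OF mcong.inv1[OF w(2)], of q "winv w @ winv q"] w by simp
  then show ?thesis using H_cong[OF _ mcong.sym] r unfolding admissible_def Hequiv_def by simp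
qed

text \<open>The statement fixes the type of the cells of D_H to pairs of a cell of C and an
  'l word set set, so the H-class of p is encoded as the set of singletons of its members.\<close>

definition Hclass :: "'l word \<Rightarrow> 'l word set set" where "Hclass p = (\<lambda>r. {r}) ` {r. admissible r \<and> Hequiv p r}"

lemma Hclass_eq_iff: assumes "admissible p" "admissible q" shows "Hclass p = Hclass q \<longleftrightarrow> Hequiv p q"
proof
  assume V: "Hclass p = Hclass q"
  have "{q} \<in> Hclass q" unfolding Hclass_def using assms admissible_Hequiv by blast
  then have "{q} \<in> Hclass p" using V by simp
  then show "Hequiv p q" unfolding Hclass_def by auto
next
  assume e: "Hequiv p q"
  have "{r. admissible r \<and> Hequiv p r} = {r. admissible r \<and> Hequiv q r}" using e Hequiv_sym Hequiv_trans by blast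
  then show "Hclass p = Hclass q" unfolding Hclass_def by simp
qed

definition Hclass_rep :: "'l word set set \<Rightarrow> 'l word" where "Hclass_rep X = (SOME p. admissible p \<and> Hclass p = X)"

lemma Hclass_rep: "admissible p \<Longrightarrow> admissible (Hclass_rep (Hclass p)) \<and> Hclass (Hclass_rep (Hclass p)) = Hclass p"
  unfolding Hclass_rep_def by (rule someI) blast

definition Hclass_move :: "'l word set set \<Rightarrow> 'l \<times> bool \<Rightarrow> 'l word set set" where
  "Hclass_move X x = Hclass (Hclass_rep X @ [x])"

lemma Hclass_move: assumes "admissible p" "admissible (p @ [x])" shows "Hclass_move (Hclass p) x = Hclass (p @ [x])"
proof -
  let ?r = "Hclass_rep (Hclass p)"
  have r: "admissible ?r" "Hclass ?r = Hclass p" using Hclass_rep[OF assms(1)] by auto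
  have e: "Hequiv p ?r" using r Hclass_eq_iff assms(1) by blast
  have "admissible (?r @ [x]) \<and> Hequiv (p @ [x]) (?r @ [x])" using Hequiv_append[OF e assms(2)] .
  then show ?thesis unfolding Hclass_move_def using Hclass_eq_iff assms(2) Hequiv_sym by auto
qed

lemma admissible_act: assumes "admissible p" shows "\<exists>w. act B C labC u p = Some w"
proof -
  have p: "p \<in> words B" using admissible_words[OF assms] .
  have "cls (p @ winv p) \<in> loopmon B C labC u" using assms HL unfolding admissible_def by blast
  then have "act B C labC u (p @ winv p) = Some u" using cls_in_loopmon_iff p by simp
  then show ?thesis using act_prefix by blast
qed

lemma Hequiv_act: assumes "Hequiv p q" shows "act B C labC u p = act B C labC u q"
proof -
  have w: "p @ winv q \<in> words B" using assms H_words unfolding Hequiv_def by blast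
  have "cls (p @ winv q) \<in> loopmon B C labC u" using assms HL unfolding Hequiv_def by blast
  then have "act B C labC u (p @ winv q) = Some u" using cls_in_loopmon_iff w by blast
  then obtain z where z: "act B C labC u p = Some z" "act B C labC z (winv q) = Some u"
    using act_prefix by blast
  then show ?thesis using act_winv[OF z(2)] by simp
qed

definition dim_of :: "'c \<Rightarrow> nat" where "dim_of c = (THE k. c \<in> dcells C k)"

lemma dim_of: "c \<in> dcells C k \<Longrightarrow> dim_of c = k"
  unfolding dim_of_def using dcells_disjoint[OF dcomplex_C] by blast

text \<open>A k-cell of D_H is a pair (c, [p]) where c is a k-cell of C and p is an admissible word
  read from u to the root of c such that the edge c can be read after p (k = 1), or p conjugates
  the label of c into H (k \<ge> 2).\<close>

definition cell_ok :: "nat \<Rightarrow> 'c \<Rightarrow> 'l word \<Rightarrow> bool" where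
  "cell_ok k c p \<longleftrightarrow> (if k = 0 then True else if k = 1 then admissible (p @ [(labC c, False)])
     else inH (p @ [(labC c, False)] @ winv p))"

definition Hcell :: "nat \<Rightarrow> 'c \<Rightarrow> 'l word \<Rightarrow> bool" where
  "Hcell k c p \<longleftrightarrow> c \<in> dcells C k \<and> admissible p \<and> act B C labC u p = Some (root C k c) \<and> cell_ok k c p"

definition cellsH :: "nat \<Rightarrow> ('c \<times> 'l word set set) set" where
  "cellsH k = {(c, Hclass p) | c p. Hcell k c p}"

definition dfH :: "nat \<Rightarrow> 'c \<times> 'l word set set \<Rightarrow> 'c \<times> 'l word set set" where
  "dfH i cX = (case cX of (c, X) \<Rightarrow> (dface C i c,
      if i = 0 \<and> 1 \<le> dim_of c then Hclass_move X (labC (edge01 C (dim_of c) c), False) else X))"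

definition DH :: "('c \<times> 'l word set set) dcx" where
  "DH = \<lparr>dcells = cellsH, dface = dfH\<rparr>"

lemma DH_simps[simp]: "dcells DH = cellsH" "dface DH = dfH" by (simp_all add: DH_def)

lemma admissible_edge01: assumes "Hcell k c p" "1 \<le> k" shows "admissible (p @ [edge_letter k c])"
proof (cases "k = 1")
  case True then show ?thesis using assms unfolding Hcell_def cell_ok_def by simp
next
  case False
  then have k: "2 \<le> k" using assms by simp
  have c: "c \<in> dcells C k" "inH (p @ [(labC c, False)] @ winv p)" "admissible p" using assms k unfolding Hcell_def cell_ok_def by auto
  have "wle (p @ [(labC c, False)] @ winv p) (p @ wwinv [edge_letter k c] @ winv p)"
    using wle_conj[OF wle_triangle_edges(1)[OF k c(1)] admissible_words[OF c(3)]] .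
  then show ?thesis using H_up[OF c(2)] unfolding admissible_def by (simp add: wwinv_def)
qed

lemma cell_ok_dface0:
  assumes ic: "Hcell k c p" and k: "1 \<le> k"
  shows "cell_ok (k - 1) (dface C 0 c) (p @ [edge_letter k c])"
proof -
  have c: "c \<in> dcells C k" "cell_ok k c p" and pw: "p \<in> words B"
    using ic admissible_words unfolding Hcell_def by auto
  consider "k = 1" | "k = 2" | "3 \<le> k" using k by linarith
  then show ?thesis
  proof cases
    case 1
    then show ?thesis by (simp add: cell_ok_def)
  next
    case 2
    have "inH (p @ wwinv [edge_letter k c, edge_letter (k - 1) (dface C 0 c)] @ winv p)"
      using H_up_conj[OF _ wle_triangle_edges(3)[OF _ c(1)] pw] c(2) 2 by (simp add: cell_ok_def)
    then show ?thesis using 2 by (simp add: cell_ok_def admissible_def wwinv_def)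
  next
    case 3
    have "inH (p @ ([edge_letter k c] @ [(labC (dface C 0 c), False)] @ winv [edge_letter k c]) @ winv p)"
      using H_up_conj[OF _ wle_bl(2)[OF c(1) 3] pw] c(2) 3 by (simp add: cell_ok_def)
    moreover have "k - 1 \<noteq> 0" "k - 1 \<noteq> 1" using 3 by auto
    ultimately show ?thesis by (simp add: cell_ok_def)
  qed
qed

lemma cell_ok_dface:
  assumes ic: "Hcell k c p" and i: "1 \<le> i" "i \<le> k"
  shows "cell_ok (k - 1) (dface C i c) p"
proof -
  have c: "c \<in> dcells C k" "cell_ok k c p" and pw: "p \<in> words B"
    using ic admissible_words unfolding Hcell_def by auto
  consider "k = 1" | "k = 2" | "3 \<le> k" using i by linarith
  then show ?thesis
  proof cases
    case 1
    then show ?thesis by (simp add: cell_ok_def)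
  next
    case 2
    have "edge01 C 2 c = dface C 2 c" by (simp add: edge01_Suc numeral_2_eq_2)
    moreover have "i = 1 \<or> i = 2" using 2 i by auto
    ultimately have "wle [(labC c, False)] (wwinv [(labC (dface C i c), False)])"
      using wle_triangle_edges(1,2)[OF _ c(1)] 2 by auto
    moreover have "inH (p @ [(labC c, False)] @ winv p)" using c(2) 2 by (simp add: cell_ok_def)
    ultimately have "inH (p @ wwinv [(labC (dface C i c), False)] @ winv p)"
      using H_up_conj pw by blast
    then show ?thesis using 2 by (simp add: cell_ok_def admissible_def wwinv_def)
  next
    case 3
    have "k - 1 \<noteq> 0" "k - 1 \<noteq> 1" using 3 by auto
    then show ?thesis using H_up_conj[OF _ wle_bl(1)[OF c(1) 3 i] pw] c(2) 3 by (simp add: cell_ok_def)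
  qed
qed

lemma Hcell_dface:
  assumes ic: "Hcell k c p" and k: "1 \<le> k" and i: "i \<le> k"
  shows "Hcell (k - 1) (dface C i c) (if i = 0 then p @ [edge_letter k c] else p) \<and>
         dfH i (c, Hclass p) = (dface C i c, Hclass (if i = 0 then p @ [edge_letter k c] else p))"
proof -
  have c: "c \<in> dcells C k" "admissible p" "act B C labC u p = Some (root C k c)"
    using ic unfolding Hcell_def by auto
  have fc: "dface C i c \<in> dcells C (k - 1)" using dface_in_dcells[OF dcomplex_C k c(1) i] .
  show ?thesis
  proof (cases "i = 0")
    case True
    have r: "admissible (p @ [edge_letter k c])" using admissible_edge01[OF ic k] .
    have "act B C labC u (p @ [edge_letter k c]) = Some (root C (k - 1) (dface C 0 c))"
      using c(3) act_edge01[OF c(1) k] root_dface0[OF dcomplex_C c(1) k] by (simp add: act_append)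
    moreover have "dfH 0 (c, Hclass p) = (dface C 0 c, Hclass (p @ [edge_letter k c]))"
      using dim_of[OF c(1)] k Hclass_move[OF c(2) r] by (simp add: dfH_def)
    ultimately show ?thesis using True r fc cell_ok_dface0[OF ic k] unfolding Hcell_def by simp
  next
    case False
    have "act B C labC u p = Some (root C (k - 1) (dface C i c))"
      using c(3) root_dface[OF dcomplex_C c(1), of i] False i by simp
    then show ?thesis using False c(2) fc cell_ok_dface[OF ic _ i] unfolding Hcell_def by (simp add: dfH_def)
  qed
qed

lemma cellsHE: "cX \<in> cellsH k \<Longrightarrow> (\<And>c p. cX = (c, Hclass p) \<Longrightarrow> Hcell k c p \<Longrightarrow> P) \<Longrightarrow> P"
  unfolding cellsH_def by blast

text \<open>The two paths from the root of c to its vertex v_2, through e(c) and then e of the face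
  opposite v_0, or directly through e of the face opposite v_1, lead to the same H-class.\<close>

lemma Hclass_triangle:
  assumes ic: "Hcell k c p" and k: "2 \<le> k"
  shows "Hclass (p @ [edge_letter (k - 1) (dface C 1 c)]) = Hclass (p @ [edge_letter k c, edge_letter (k - 1) (dface C 0 c)])"
proof -
  have c: "c \<in> dcells C k" and pw: "p \<in> words B"
    using ic admissible_words unfolding Hcell_def by auto
  have "admissible (p @ [edge_letter (k - 1) (dface C 1 c)])"
    using admissible_edge01[of "k - 1" "dface C 1 c" p] Hcell_dface[OF ic _, of 1] k by auto
  moreover have "admissible ((p @ [edge_letter k c]) @ [edge_letter (k - 1) (dface C 0 c)])"
    using admissible_edge01[of "k - 1" "dface C 0 c" "p @ [edge_letter k c]"] Hcell_dface[OF ic _, of 0] k by auto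
  moreover have "inH (p @ [(labC c, False)] @ winv p)"
    using ic k unfolding Hcell_def cell_ok_def by simp
  then have "Hequiv (p @ [edge_letter (k - 1) (dface C 1 c)]) (p @ [edge_letter k c, edge_letter (k - 1) (dface C 0 c)])"
    using H_up_conj[OF _ wle_triangle_winv[OF k c] pw] unfolding Hequiv_def by simp
  ultimately show ?thesis using Hclass_eq_iff by simp
qed

lemma dfH_dfH: assumes ic: "Hcell k c p" and k: "2 \<le> k" and ij: "i < j" "j \<le> k"
  shows "dfH i (dfH j (c, Hclass p)) = dfH (j - 1) (dfH i (c, Hclass p))"
proof -
  have c: "c \<in> dcells C k" using ic unfolding Hcell_def by simp
  have j1: "1 \<le> j" using ij by simp
  have Fj: "Hcell (k - 1) (dface C j c) p" "dfH j (c, Hclass p) = (dface C j c, Hclass p)"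
    using Hcell_dface[OF ic _ ij(2)] k j1 by auto
  have id: "dface C i (dface C j c) = dface C (j - 1) (dface C i c)" using dface_dface[OF dcomplex_C k c ij] .
  show ?thesis
  proof (cases "i = 0")
    case False
    have Fi: "Hcell (k - 1) (dface C i c) p" "dfH i (c, Hclass p) = (dface C i c, Hclass p)"
      using Hcell_dface[OF ic _, of i] k ij False by auto
    have L: "dfH i (dface C j c, Hclass p) = (dface C i (dface C j c), Hclass p)"
      using Hcell_dface[OF Fj(1), of i] k ij False by auto
    have R: "dfH (j - 1) (dface C i c, Hclass p) = (dface C (j - 1) (dface C i c), Hclass p)"
      using Hcell_dface[OF Fi(1), of "j - 1"] k ij False by auto
    show ?thesis using Fj(2) Fi(2) L R id by simp
  next
    case True
    let ?a = "edge_letter k c"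
    have Fi: "Hcell (k - 1) (dface C 0 c) (p @ [?a])" "dfH 0 (c, Hclass p) = (dface C 0 c, Hclass (p @ [?a]))"
      using Hcell_dface[OF ic _, of 0] k by auto
    have L: "dfH 0 (dface C j c, Hclass p) = (dface C 0 (dface C j c), Hclass (p @ [edge_letter (k - 1) (dface C j c)]))"
      using Hcell_dface[OF Fj(1), of 0] k by auto
    show ?thesis
    proof (cases "j = 1")
      case False
      have R: "dfH (j - 1) (dface C 0 c, Hclass (p @ [?a])) = (dface C (j - 1) (dface C 0 c), Hclass (p @ [?a]))"
        using Hcell_dface[OF Fi(1), of "j - 1"] k ij False by auto
      have "edge01 C (k - 1) (dface C j c) = edge01 C k c" using edge01_dface[OF dcomplex_C c, of j] ij False by simp
      then show ?thesis using Fj(2) Fi(2) L R id True by simp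
    next
      case j1: True
      have R: "dfH 0 (dface C 0 c, Hclass (p @ [?a])) = (dface C 0 (dface C 0 c), Hclass (p @ [?a, edge_letter (k - 1) (dface C 0 c)]))"
        using Hcell_dface[OF Fi(1), of 0] k by auto
      then show ?thesis using Fj(2) Fi(2) L id True j1 Hclass_triangle[OF ic k] by simp
    qed
  qed
qed

lemma dcomplex_DH: "dcomplex DH"
proof -
  obtain n where n: "\<forall>k>n. dcells C k = {}" using dcomplex_C unfolding dcomplex_def by blast
  have disj: "\<forall>k j. k \<noteq> j \<longrightarrow> cellsH k \<inter> cellsH j = {}"
    unfolding cellsH_def Hcell_def using dcells_disjoint[OF dcomplex_C] by blast
  have faces: "\<forall>k cX i. 1 \<le> k \<longrightarrow> cX \<in> cellsH k \<longrightarrow> i \<le> k \<longrightarrow> dfH i cX \<in> cellsH (k - 1)"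
  proof (intro allI impI)
    fix k cX i assume a: "1 \<le> k" "cX \<in> cellsH k" "i \<le> k"
    obtain c p where cp: "cX = (c, Hclass p)" "Hcell k c p" using a(2) by (rule cellsHE)
    show "dfH i cX \<in> cellsH (k - 1)" using Hcell_dface[OF cp(2) a(1) a(3)] cp unfolding cellsH_def by blast
  qed
  have ident: "\<forall>k cX i j. 2 \<le> k \<longrightarrow> cX \<in> cellsH k \<longrightarrow> i < j \<longrightarrow> j \<le> k \<longrightarrow>
         dfH i (dfH j cX) = dfH (j - 1) (dfH i cX)"
  proof (intro allI impI)
    fix k cX i j assume a: "2 \<le> k" "cX \<in> cellsH k" "i < j" "j \<le> k"
    obtain c p where cp: "cX = (c, Hclass p)" "Hcell k c p" using a(2) by (rule cellsHE)
    show "dfH i (dfH j cX) = dfH (j - 1) (dfH i cX)" using dfH_dfH[OF cp(2) a(1) a(3) a(4)] cp by simp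
  qed
  have fin: "\<forall>k>n. cellsH k = {}" using n unfolding cellsH_def Hcell_def by auto
  show ?thesis unfolding dcomplex_def using disj faces ident fin by auto
qed

fun vert_path :: "nat \<Rightarrow> nat \<Rightarrow> 'c \<Rightarrow> 'l word" where
  "vert_path 0 j c = []"
| "vert_path (Suc k) j c = (if j < Suc k then vert_path k j (dface C (Suc k) c)
     else edge_letter (Suc k) c # vert_path k (j - 1) (dface C 0 c))"

lemma vert_path_0: "vert_path k 0 c = []"
  by (induction k arbitrary: c) auto

lemma vert_DH: "Hcell k c p \<Longrightarrow> j \<le> k \<Longrightarrow> admissible (p @ vert_path k j c) \<and>
    vert DH k j (c, Hclass p) = (vert C k j c, Hclass (p @ vert_path k j c))"
proof (induction k arbitrary: c p j)
  case 0 then show ?case unfolding Hcell_def by simp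
next
  case (Suc k)
  show ?case
  proof (cases "j < Suc k")
    case True
    have F: "Hcell k (dface C (Suc k) c) p" "dfH (Suc k) (c, Hclass p) = (dface C (Suc k) c, Hclass p)"
      using Hcell_dface[OF Suc.prems(1), of "Suc k"] by auto
    have "admissible (p @ vert_path k j (dface C (Suc k) c)) \<and>
      vert DH k j (dface C (Suc k) c, Hclass p) = (vert C k j (dface C (Suc k) c), Hclass (p @ vert_path k j (dface C (Suc k) c)))"
      using Suc.IH[OF F(1)] True by simp
    then show ?thesis using True F(2) by simp
  next
    case False
    then have j: "j = Suc k" using Suc.prems by simp
    have F: "Hcell k (dface C 0 c) (p @ [edge_letter (Suc k) c])"
      "dfH 0 (c, Hclass p) = (dface C 0 c, Hclass (p @ [edge_letter (Suc k) c]))"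
      using Hcell_dface[OF Suc.prems(1), of 0] by auto
    have "admissible ((p @ [edge_letter (Suc k) c]) @ vert_path k k (dface C 0 c)) \<and>
      vert DH k k (dface C 0 c, Hclass (p @ [edge_letter (Suc k) c]))
      = (vert C k k (dface C 0 c), Hclass ((p @ [edge_letter (Suc k) c]) @ vert_path k k (dface C 0 c)))"
      using Suc.IH[OF F(1)] by simp
    then show ?thesis using j F(2) by simp
  qed
qed

lemma root_DH: "Hcell k c p \<Longrightarrow> root DH k (c, Hclass p) = (root C k c, Hclass p)"
  using vert_DH[of k c p 0] vert_path_0 unfolding root_def by simp

lemma immersion_DH: "immersion DH C fst"
  unfolding immersion_def
proof (intro conjI allI ballI impI)
  fix k cX assume "cX \<in> dcells DH k"
  then show "fst cX \<in> dcells C k" by (auto elim!: cellsHE simp: Hcell_def)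
next
  fix k cX i assume a: "cX \<in> dcells DH k" "i \<le> k" "1 \<le> k"
  then show "fst (dface DH i cX) = dface C i (fst cX)" by (auto simp: dfH_def split: prod.split)
next
  fix k c1 c2 j assume a: "c1 \<in> dcells DH k" "c2 \<in> dcells DH k" "j \<le> k"
    and v: "vert DH k j c1 = vert DH k j c2" and f: "fst c1 = fst c2"
  obtain c p1 where 1: "c1 = (c, Hclass p1)" "Hcell k c p1" using a(1) by (auto elim: cellsHE)
  obtain c' p2 where 2: "c2 = (c', Hclass p2)" "Hcell k c' p2" using a(2) by (auto elim: cellsHE)
  have cc: "c' = c" using f 1 2 by simp
  have h1: "admissible (p1 @ vert_path k j c)" "vert DH k j c1 = (vert C k j c, Hclass (p1 @ vert_path k j c))"
    using vert_DH[OF 1(2) a(3)] 1 by auto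
  have h2: "admissible (p2 @ vert_path k j c)" "vert DH k j c2 = (vert C k j c, Hclass (p2 @ vert_path k j c))"
    using vert_DH[OF 2(2)[unfolded cc] a(3)] 2 cc by auto
  have "Hequiv (p1 @ vert_path k j c) (p2 @ vert_path k j c)" using v h1 h2 Hclass_eq_iff by auto
  then have "Hequiv p1 p2" by (rule Hequiv_cancel)
  then have "Hclass p1 = Hclass p2" using Hclass_eq_iff 1(2) 2(2) unfolding Hcell_def by blast
  then show "c1 = c2" using 1 2 cc by simp
qed

lemma labeled_DH: "labeled B DH (labC \<circ> fst)"
  unfolding labeled_def using dcomplex_DH immersion_comp[OF dcomplex_DH immersion_DH immersion_lab] by simp

lemma lab_immersion_DH: "lab_immersion DH (labC \<circ> fst) C labC fst"
  unfolding lab_immersion_def using immersion_DH by simp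

definition vH where "vH = (u, Hclass [])"

lemma admissible_Nil: "admissible []" unfolding admissible_def using H_one by simp

lemma Hcell_base: "Hcell 0 u []" unfolding Hcell_def cell_ok_def using u admissible_Nil by simp

lemma vH_in_DH: "vH \<in> dcells DH 0"
proof -
  have "(u, Hclass []) \<in> cellsH 0" unfolding cellsH_def using Hcell_base by blast
  then show ?thesis by (simp add: vH_def)
qed


definition labH :: "'c \<times> 'l word set set \<Rightarrow> 'l" where "labH = labC \<circ> fst"
lemma labH_apply: "labH e = labC (fst e)" by (simp add: labH_def)

lemma labeled_complex_DH: "labeled_complex B DH labH"
  unfolding labeled_complex_def labeled_complex_axioms_def labH_def using labeled_DH base base_complex_def by blast

lemma admissible_Pletter: assumes P: "\<rho> \<in> Pset B" and q: "q \<in> words B"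
  shows "admissible (q @ [(\<rho>, b)]) \<longleftrightarrow> inH (q @ [(\<rho>, False)] @ winv q)"
    and "Hequiv (q @ [(\<rho>, b)]) q \<longleftrightarrow> inH (q @ [(\<rho>, False)] @ winv q)"
proof -
  have d: "idem_word [(\<rho>, b)]" using idem_word_Pletter[OF P] .
  have m1: "mcong B [(\<rho>, b)] [(\<rho>, False)]"
    using mcong_Pletter_inv[OF P] mcong.refl[where B=B] P by (cases b) auto
  have m2: "mcong B ([(\<rho>, b)] @ winv [(\<rho>, b)]) [(\<rho>, False)]"
    using mcong.trans[OF mcong.sym[OF d[unfolded idem_word_def, THEN conjunct2, unfolded wwinv_def]] m1] .
  have c1: "mcong B (q @ ([(\<rho>, b)] @ winv [(\<rho>, b)]) @ winv q) (q @ [(\<rho>, False)] @ winv q)"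
    using mcong_ctxt[OF m2] q by simp
  have c2: "mcong B (q @ [(\<rho>, b)] @ winv q) (q @ [(\<rho>, False)] @ winv q)"
    using mcong_ctxt[OF m1] q by simp
  show "admissible (q @ [(\<rho>, b)]) \<longleftrightarrow> inH (q @ [(\<rho>, False)] @ winv q)"
    unfolding admissible_def using H_cong c1 mcong.sym[OF c1] by (simp del: winv_single) (meson H_cong)
  show "Hequiv (q @ [(\<rho>, b)]) q \<longleftrightarrow> inH (q @ [(\<rho>, False)] @ winv q)"
    unfolding Hequiv_def using H_cong c2 mcong.sym[OF c2] by simp (meson H_cong)
qed

lemma moves_DH_admissible:
  assumes q: "admissible q" and s: "labeled_complex.moves B DH labH (w', Hclass q) x y"
  shows "admissible (q @ [x])"
proof -
  interpret DHL: labeled_complex B DH labH using labeled_complex_DH .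
  obtain a b where x: "x = (a, b)" by (cases x)
  have qw: "q \<in> words B" using admissible_words[OF q] .
  consider (F) "a \<in> Xset B" "\<not> b" "\<exists>e\<in>cellsH 1. labC (fst e) = a \<and> dfH 1 e = (w', Hclass q)"
    | (T) "a \<in> Xset B" "b" "\<exists>e\<in>cellsH 1. labC (fst e) = a \<and> dfH 0 e = (w', Hclass q)"
    | (P) "a \<in> Pset B" "\<exists>k c. c \<in> cellsH k \<and> labC (fst c) = a \<and> root DH k c = (w', Hclass q)"
  proof -
    have "(a \<in> Xset B \<and> \<not> b \<and> (\<exists>e\<in>cellsH 1. labC (fst e) = a \<and> dfH 1 e = (w', Hclass q) \<and> dfH 0 e = y)) \<or>
      (a \<in> Xset B \<and> b \<and> (\<exists>e\<in>cellsH 1. labC (fst e) = a \<and> dfH 0 e = (w', Hclass q) \<and> dfH 1 e = y)) \<or>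
      (a \<in> Pset B \<and> y = (w', Hclass q) \<and> (\<exists>k c. c \<in> cellsH k \<and> labC (fst c) = a \<and> root DH k c = (w', Hclass q)))"
      using s x unfolding DHL.moves_def by (simp add: labH_apply)
    then show thesis using that by blast
  qed
  then show ?thesis
  proof cases
    case F
    then obtain c p where cp: "Hcell 1 c p" "labC c = a" "dfH 1 (c, Hclass p) = (w', Hclass q)"
      by (auto elim!: cellsHE)
    then have "Hclass p = Hclass q" using Hcell_dface[OF cp(1), of 1] by simp
    then have "Hequiv p q" using Hclass_eq_iff q cp(1) unfolding Hcell_def by blast
    moreover have "admissible (p @ [(a, False)])" using cp unfolding Hcell_def cell_ok_def by simp
    ultimately show ?thesis using Hequiv_append x F by simp
  next
    case T
    then obtain c p where cp: "Hcell 1 c p" "labC c = a" "dfH 0 (c, Hclass p) = (w', Hclass q)"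
      by (auto elim!: cellsHE)
    then have "Hclass (p @ [(a, False)]) = Hclass q" using Hcell_dface[OF cp(1), of 0] by simp
    moreover have "admissible (p @ [(a, False)])" using cp unfolding Hcell_def cell_ok_def by simp
    ultimately have "Hequiv (p @ [(a, False)]) q" using Hclass_eq_iff q by blast
    then show ?thesis using admissible_Hequiv_winv[of p "[(a, False)]" q] x T by simp
  next
    case P
    then obtain k cX where cX: "cX \<in> cellsH k" "labC (fst cX) = a" "root DH k cX = (w', Hclass q)" by blast
    obtain c p where cp: "cX = (c, Hclass p)" "Hcell k c p" using cX(1) by (rule cellsHE)
    then have "Hclass p = Hclass q" using root_DH[OF cp(2)] cX by simp
    then have e: "Hequiv q p" using Hclass_eq_iff q cp(2) unfolding Hcell_def by blast
    have c: "c \<in> dcells C k" "labC c = a" using cp cX unfolding Hcell_def by auto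
    then have "inH (p @ [(a, False)] @ winv p)"
      using cp(2) dim_P[OF c(1)] P unfolding Hcell_def cell_ok_def by simp
    then have "inH (q @ [(a, False)] @ winv q)" using H_conj[OF e] by blast
    then show ?thesis using admissible_Pletter(1)[OF P(1) qw] x by simp
  qed
qed

lemma moves_DH_edge:
  assumes q: "admissible q" and w': "act B C labC u q = Some w'" and rx: "admissible (q @ [x])"
    and w: "act B C labC u (q @ [x]) = Some w" and x: "x = (a, b)" and X: "a \<in> Xset B"
  shows "labeled_complex.moves B DH labH (w', Hclass q) x (w, Hclass (q @ [x]))"
proof -
  interpret DHL: labeled_complex B DH labH using labeled_complex_DH .
  have sC: "moves w' x w" using w w' step_eq_Some_iff by (simp add: act_snoc)
  show ?thesis
  proof (cases b)
    case False
    obtain c where c: "c \<in> dcells C 1" "labC c = a" "dface C 1 c = w'" "dface C 0 c = w"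
      using sC x X False Xset_Pset_disjoint unfolding moves_def by auto
    have ic: "Hcell 1 c q" unfolding Hcell_def cell_ok_def using c q w' rx x False by (simp add: root_def)
    have f1: "dfH 1 (c, Hclass q) = (w', Hclass q)" using Hcell_dface[OF ic, of 1] c by simp
    have f0: "dfH 0 (c, Hclass q) = (w, Hclass (q @ [x]))" using Hcell_dface[OF ic, of 0] c x False by simp
    have "(c, Hclass q) \<in> cellsH 1" unfolding cellsH_def using ic by blast
    then show ?thesis unfolding DHL.moves_def using x X False f1 f0 c by (auto simp: labH_apply)
  next
    case bT: True
    obtain c where c: "c \<in> dcells C 1" "labC c = a" "dface C 0 c = w'" "dface C 1 c = w"
      using sC x X bT Xset_Pset_disjoint unfolding moves_def by auto
    have r2: "admissible (q @ [x] @ [(a, False)])" and e2: "Hequiv (q @ [x] @ [(a, False)]) q"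
      using admissible_wwinv_suffix[OF rx] x bT by simp_all
    have ic: "Hcell 1 c (q @ [x])" unfolding Hcell_def cell_ok_def using c rx w r2 x by (simp add: root_def)
    have f1: "dfH 1 (c, Hclass (q @ [x])) = (w, Hclass (q @ [x]))" using Hcell_dface[OF ic, of 1] c by simp
    have f0: "dfH 0 (c, Hclass (q @ [x])) = (w', Hclass (q @ [x] @ [(a, False)]))" using Hcell_dface[OF ic, of 0] c by simp
    have "Hclass (q @ [x] @ [(a, False)]) = Hclass q" using Hclass_eq_iff r2 q e2 by simp
    moreover have "(c, Hclass (q @ [x])) \<in> cellsH 1" unfolding cellsH_def using ic by blast
    ultimately show ?thesis unfolding DHL.moves_def using x X bT f1 f0 c by (auto simp: labH_apply)
  qed
qed

lemma moves_DH_Pletter: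
  assumes q: "admissible q" and w': "act B C labC u q = Some w'" and rx: "admissible (q @ [x])"
    and w: "act B C labC u (q @ [x]) = Some w" and x: "x = (a, b)" and P: "a \<in> Pset B"
  shows "labeled_complex.moves B DH labH (w', Hclass q) x (w, Hclass (q @ [x]))"
proof -
  interpret DHL: labeled_complex B DH labH using labeled_complex_DH .
  have qw: "q \<in> words B" using admissible_words[OF q] .
  have sC: "moves w' x w" using w w' step_eq_Some_iff by (simp add: act_snoc)
  obtain k c where c: "w = w'" "c \<in> dcells C k" "labC c = a" "root C k c = w'"
    using sC x P Xset_Pset_disjoint unfolding moves_def by auto
  have k: "2 \<le> k" using dim_P[OF c(2)] c P by simp
  have okH: "inH (q @ [(a, False)] @ winv q)" using admissible_Pletter(1)[OF P qw] rx x by simp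
  have ic: "Hcell k c q" unfolding Hcell_def cell_ok_def using c q w' okH k by simp
  have "Hequiv (q @ [x]) q" using admissible_Pletter(2)[OF P qw] okH x by simp
  then have V: "Hclass (q @ [x]) = Hclass q" using Hclass_eq_iff rx q by simp
  have "(c, Hclass q) \<in> cellsH k" unfolding cellsH_def using ic by blast
  moreover have "root DH k (c, Hclass q) = (w', Hclass q)" using root_DH[OF ic] c by simp
  ultimately show ?thesis unfolding DHL.moves_def using x P c V by (auto simp: labH_apply)
qed

lemma moves_DH:
  assumes q: "admissible q" and w': "act B C labC u q = Some w'" and rx: "admissible (q @ [x])"
    and w: "act B C labC u (q @ [x]) = Some w"
  shows "labeled_complex.moves B DH labH (w', Hclass q) x (w, Hclass (q @ [x]))"
proof -
  obtain a b where x: "x = (a, b)" by (cases x)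
  then have "a \<in> Xset B \<or> a \<in> Pset B" using admissible_words[OF rx] by simp
  then show ?thesis using moves_DH_edge[OF q w' rx w x] moves_DH_Pletter[OF q w' rx w x] by blast
qed

lemma act_DH: "p \<in> words B \<Longrightarrow> act B DH labH vH p =
   (if admissible p then Some (the (act B C labC u p), Hclass p) else None)"
proof (induction p rule: rev_induct)
  case Nil then show ?case using admissible_Nil by (simp add: vH_def act_def)
next
  case (snoc x q)
  interpret DHL: labeled_complex B DH labH using labeled_complex_DH .
  have qw: "q \<in> words B" using snoc.prems by simp
  show ?case
  proof (cases "admissible q")
    case False
    then have "\<not> admissible (q @ [x])" using admissible_prefix by blast
    then show ?thesis using snoc.IH[OF qw] False by (subst DHL.act_snoc) simp
  next
    case True
    obtain w' where w': "act B C labC u q = Some w'" using admissible_act[OF True] by blast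
    have IH: "act B DH labH vH q = Some (w', Hclass q)" using snoc.IH[OF qw] True w' by simp
    show ?thesis
    proof (cases "admissible (q @ [x])")
      case True2: True
      obtain w where w: "act B C labC u (q @ [x]) = Some w" using admissible_act[OF True2] by blast
      have "DHL.moves (w', Hclass q) x (w, Hclass (q @ [x]))" using moves_DH[OF True w' True2 w] .
      then have "step B DH labH (w', Hclass q) x = Some (w, Hclass (q @ [x]))" using DHL.step_eq_Some_iff by blast
      then show ?thesis using IH True2 w by (subst DHL.act_snoc) simp
    next
      case False
      have "step B DH labH (w', Hclass q) x = None"
        using DHL.step_eq_None_iff moves_DH_admissible[OF True] False by blast
      then show ?thesis using IH False by (subst DHL.act_snoc) simp
    qed
  qed
qed

lemma cls_in_loopmon_DH_iff:
  assumes p: "p \<in> words B"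
  shows "cls p \<in> loopmon B DH labH vH \<longleftrightarrow> inH p"
proof -
  interpret DHL: labeled_complex B DH labH using labeled_complex_DH .
  have "cls p \<in> loopmon B DH labH vH \<longleftrightarrow> admissible p \<and> the (act B C labC u p) = u \<and> Hclass p = Hclass []"
    using DHL.cls_in_loopmon_iff[OF p] act_DH[OF p] by (simp add: vH_def)
  also have "\<dots> \<longleftrightarrow> inH p"
  proof
    assume "admissible p \<and> the (act B C labC u p) = u \<and> Hclass p = Hclass []"
    then have "Hequiv p []" using Hclass_eq_iff admissible_Nil by blast
    then show "inH p" unfolding Hequiv_def by simp
  next
    assume "inH p"
    then have e: "Hequiv p []" unfolding Hequiv_def by simp
    then have "admissible p" by (rule Hequiv_admissible)
    then show "admissible p \<and> the (act B C labC u p) = u \<and> Hclass p = Hclass []"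
      using Hequiv_act[OF e] Hclass_eq_iff admissible_Nil e by simp
  qed
  finally show ?thesis .
qed

lemma loopmon_DH: "loopmon B DH labH vH = H"
proof -
  interpret DHL: labeled_complex B DH labH using labeled_complex_DH .
  show ?thesis
  proof (intro set_eqI iffI)
    fix m assume m: "m \<in> loopmon B DH labH vH"
    then obtain p where "p \<in> words B" "m = cls p" by (rule DHL.loopmonE)
    then show "m \<in> H" using cls_in_loopmon_DH_iff m by blast
  next
    fix m assume m: "m \<in> H"
    then obtain p where "p \<in> words B" "m = cls p" using closed_sub[OF Hc] by (metis McarE subsetD)
    then show "m \<in> loopmon B DH labH vH" using cls_in_loopmon_DH_iff m by blast
  qed
qed

lemma dconnected_DH: "dconnected DH"
proof -
  interpret DHL: labeled_complex B DH labH using labeled_complex_DH .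
  show ?thesis
  proof (rule DHL.dconnected_from[OF vH_in_DH], intro ballI)
    fix y assume y: "y \<in> dcells DH 0"
    then obtain c p where cp: "y = (c, Hclass p)" "Hcell 0 c p" by (auto elim: cellsHE)
    have "act B DH labH vH p = Some y"
      using act_DH[OF admissible_words] cp unfolding Hcell_def by simp
    then show "DHL.adj\<^sup>*\<^sup>* vH y" by (rule DHL.act_adj_path)
  qed
qed

lemma realizes_DH: "realizes B C labC u H DH labH fst vH"
  unfolding realizes_def using labeled_DH dconnected_DH lab_immersion_DH vH_in_DH loopmon_DH
  by (simp add: vH_def labH_def)

end

theorem realization_exists:
  fixes B :: "'l dcx" and C :: "'c dcx" and labC :: "'c \<Rightarrow> 'l"
  assumes "is_base B" "labeled B C labC" "u \<in> dcells C 0"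
    "closed_inv_submonoid B (Mcar B) H" "H \<subseteq> loopmon B C labC u"
  shows "\<exists>(DH :: ('c \<times> 'l word set set) dcx) labH fH v. realizes B C labC u H DH labH fH v"
proof -
  interpret E: coset_complex B C labC u H
    using labeled_complexI[OF assms(1,2)] assms(3-) unfolding coset_complex_def coset_complex_axioms_def by blast
  show ?thesis using E.realizes_DH by blast
qed

theorem realization_exists_unique:
  fixes B :: "'l dcx" and C :: "'c dcx" and labC :: "'c \<Rightarrow> 'l"
  assumes base: "is_base B" and lC: "labeled B C labC" and u: "u \<in> dcells C 0"
    and Hc: "closed_inv_submonoid B (Mcar B) H" and HL: "H \<subseteq> loopmon B C labC u"
  shows "\<exists>(DH :: ('c \<times> 'l word set set) dcx) labH fH v.
     realizes B C labC u H DH labH fH v \<and>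
     (\<forall>(D' :: 'd dcx) lab' f' v'. realizes B C labC u H D' lab' f' v' \<longrightarrow>
        (\<exists>h. dc_iso DH D' h \<and> h v = v' \<and> (\<forall>k. \<forall>c\<in>dcells DH k. f' (h c) = fH c \<and> lab' (h c) = labH c)))"
proof -
  obtain DH :: "('c \<times> 'l word set set) dcx" and labH fH v where r: "realizes B C labC u H DH labH fH v"
    using realization_exists[OF base lC u Hc HL] by blast
  then show ?thesis using realizations_isomorphic[OF base lC r] by blast
qed

section \<open>Conjugacy\<close>

context base_complex
begin

lemma closed_conj_iff:
  assumes Hc: "closed_inv_submonoid B (Mcar B) H"
    and HK: "\<forall>h\<in>H. mmul B (mmul B (cls p) h) (minv B (cls p)) \<in> K"
    and KH: "\<forall>k\<in>K. mmul B (mmul B (minv B (cls p)) k) (cls p) \<in> H"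
    and p: "p \<in> words B" and s: "s \<in> words B"
  shows "cls (p @ s @ winv p) \<in> K \<longleftrightarrow> cls s \<in> H"
proof
  assume "cls (p @ s @ winv p) \<in> K"
  then have "mmul B (mmul B (minv B (cls p)) (cls (p @ s @ winv p))) (cls p) \<in> H" using KH by blast
  then have "cls (winv p @ (p @ s @ winv p) @ p) \<in> H" using mmul_cls minv_cls p s by simp
  moreover have "wle ((winv p @ p) @ s @ winv p @ p) (s @ winv p @ p)"
    using wle_drop_idem[OF idem_word_wwinv[of "winv p"], of "[]" "s @ winv p @ p"] p s by (simp add: wwinv_def)
  moreover have "wle (s @ (winv p @ p) @ []) (s @ [])"
    using wle_drop_idem[OF idem_word_wwinv[of "winv p"], of s "[]"] p s by (simp add: wwinv_def)
  ultimately show "cls s \<in> H"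
    using closed_upward[OF Hc] cls_in_Mcar[OF s] wle_trans by fastforce
next
  assume "cls s \<in> H"
  then have "mmul B (mmul B (cls p) (cls s)) (minv B (cls p)) \<in> K" using HK by blast
  then show "cls (p @ s @ winv p) \<in> K" using mmul_cls minv_cls p s by simp
qed

end

lemma dc_iso_loopmon:
  assumes base: "is_base B" and l1: "labeled B D1 lab1" and l2: "labeled B D2 lab2"
    and iso: "dc_iso D1 D2 h" and labh: "\<And>k c. c \<in> dcells D1 k \<Longrightarrow> lab2 (h c) = lab1 c"
    and v: "v \<in> dcells D1 0"
  shows "loopmon B D2 lab2 (h v) = loopmon B D1 lab1 v"
proof
  let ?g = "inv_into (allcells D1) h"
  have L1: "labeled_complex B D1 lab1" and L2: "labeled_complex B D2 lab2"
    using labeled_complexI[OF base l1] labeled_complexI[OF base l2] .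
  have bij: "bij_betw h (allcells D1) (allcells D2)" using iso unfolding dc_iso_def by blast
  have g: "dmorphism D2 D1 ?g"
    using dc_iso_inv[OF iso] l1 l2 unfolding labeled_def by blast
  have labg: "lab1 (?g c') = lab2 c'" if c': "c' \<in> dcells D2 k" for k c'
  proof -
    have "c' \<in> allcells D2" using c' unfolding allcells_def by blast
    then show ?thesis using labh[OF dmorphism_cell[OF g c']] bij bij_betw_inv_into_right by metis
  qed
  interpret Mh: labeled_morphism B D1 lab1 D2 lab2 h
    using L1 L2 dc_iso_dmorphism[OF iso] labh
    unfolding labeled_morphism_def labeled_morphism_axioms_def labeled_complex_def by blast
  interpret Mg: labeled_morphism B D2 lab2 D1 lab1 ?g
    using L1 L2 g labg unfolding labeled_morphism_def labeled_morphism_axioms_def labeled_complex_def by blast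
  have "?g (h v) = v" using v bij bij_betw_inv_into_left unfolding allcells_def by fastforce
  then show "loopmon B D2 lab2 (h v) \<subseteq> loopmon B D1 lab1 v" using Mg.loopmon_image_subset by metis
  show "loopmon B D1 lab1 v \<subseteq> loopmon B D2 lab2 (h v)" using Mh.loopmon_image_subset .
qed

lemma conjugate_of_dc_iso:
  assumes base: "is_base B" and lC: "labeled B C labC"
    and r1: "realizes B C labC u H D1 lab1 f1 v1" and r2: "realizes B C labC u K D2 lab2 f2 v2"
    and iso: "dc_iso D1 D2 h" and hf: "\<forall>k. \<forall>c\<in>dcells D1 k. f2 (h c) = f1 c"
  shows "conjugate B (loopmon B C labC u) H K"
proof -
  have R1: "labeled B D1 lab1" "lab_immersion D1 lab1 C labC f1" "v1 \<in> dcells D1 0" "f1 v1 = u"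
    "loopmon B D1 lab1 v1 = H" using r1 unfolding realizes_def by auto
  have R2: "labeled B D2 lab2" "dconnected D2" "lab_immersion D2 lab2 C labC f2" "v2 \<in> dcells D2 0"
    "f2 v2 = u" "loopmon B D2 lab2 v2 = K" using r2 unfolding realizes_def by auto
  interpret base_complex B using base by (simp add: base_complex_def)
  interpret L2: labeled_complex B D2 lab2 using labeled_complexI[OF base R2(1)] .
  interpret CC: labeled_complex B C labC using labeled_complexI[OF base lC] .
  interpret M2: labeled_morphism B D2 lab2 C labC f2 using labeled_morphismI[OF base R2(1) lC R2(3)] .
  define w where "w = h v1"
  have labh: "lab2 (h c) = lab1 c" if c: "c \<in> dcells D1 k" for k c
    using dmorphism_cell[OF dc_iso_dmorphism[OF iso] c] R1(2) R2(3) hf c unfolding lab_immersion_def by metis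
  have Lw: "loopmon B D2 lab2 w = H"
    using dc_iso_loopmon[OF base R1(1) R2(1) iso labh R1(3)] R1(5) unfolding w_def by simp
  have "w \<in> dcells D2 0" using dmorphism_cell[OF dc_iso_dmorphism[OF iso] R1(3)] unfolding w_def .
  then obtain p where p: "p \<in> words B" "act B D2 lab2 v2 p = Some w"
    using L2.dconnected_path[OF R2(2) R2(4)] by blast
  have "cls p \<in> loopmon B C labC u"
    using M2.act_image[OF p(2)] R2(5) hf R1(3,4) CC.cls_in_loopmon_iff[OF p(1)] unfolding w_def by simp
  moreover have "mmul B (mmul B (cls p) g) (minv B (cls p)) \<in> K" if g: "g \<in> H" for g
  proof -
    obtain s where s: "s \<in> words B" "g = cls s" "cls s \<in> loopmon B D2 lab2 w"
      using g Lw L2.loopmonE by metis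
    then show ?thesis using L2.loopmon_act_conj[OF p(2) s(1)] R2(6) mmul_cls minv_cls p(1) by simp
  qed
  moreover have "mmul B (mmul B (minv B (cls p)) k) (cls p) \<in> H" if k: "k \<in> K" for k
  proof -
    obtain t where t: "t \<in> words B" "k = cls t" "act B D2 lab2 v2 t = Some v2"
      using k R2(6) L2.loopmonE by metis
    have "act B D2 lab2 w (winv p @ t @ p) = Some w"
      using p(2) L2.act_winv[OF p(2)] t(3) by (simp add: L2.act_append)
    then show ?thesis using L2.cls_in_loopmon_iff[of "winv p @ t @ p" w] Lw mmul_cls minv_cls p(1) t by simp
  qed
  ultimately show ?thesis unfolding conjugate_def by blast
qed

lemma dc_iso_of_conjugate:
  assumes base: "is_base B" and lC: "labeled B C labC"
    and Hc: "closed_inv_submonoid B (Mcar B) H"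
    and r1: "realizes B C labC u H D1 lab1 f1 v1" and r2: "realizes B C labC u K D2 lab2 f2 v2"
    and cj: "conjugate B (loopmon B C labC u) H K"
  shows "\<exists>h. dc_iso D1 D2 h \<and> (\<forall>k. \<forall>c\<in>dcells D1 k. f2 (h c) = f1 c)"
proof -
  have R2: "labeled B D2 lab2" "lab_immersion D2 lab2 C labC f2" "v2 \<in> dcells D2 0"
    "f2 v2 = u" "loopmon B D2 lab2 v2 = K" using r2 unfolding realizes_def by auto
  interpret base_complex B using base by (simp add: base_complex_def)
  interpret L2: labeled_complex B D2 lab2 using labeled_complexI[OF base R2(1)] .
  interpret CC: labeled_complex B C labC using labeled_complexI[OF base lC] .
  interpret M2: labeled_morphism B D2 lab2 C labC f2 using labeled_morphismI[OF base R2(1) lC R2(2)] .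
  obtain p where p: "p \<in> words B" "act B C labC u p = Some u"
    and HK: "\<forall>h\<in>H. mmul B (mmul B (cls p) h) (minv B (cls p)) \<in> K"
    and KH: "\<forall>k\<in>K. mmul B (mmul B (minv B (cls p)) k) (cls p) \<in> H"
    using cj unfolding conjugate_def by (metis CC.loopmonE)
  have "cls (p @ winv p) \<in> K" using closed_conj_iff[OF Hc HK KH p(1) words_Nil] closed_one[OF Hc] by simp
  then have "act B D2 lab2 v2 (p @ winv p) = Some v2"
    using L2.cls_in_loopmon_iff[of "p @ winv p" v2] R2(5) p(1) by simp
  then obtain w where w: "act B D2 lab2 v2 p = Some w" using L2.act_prefix by blast
  have "loopmon B D2 lab2 w = H"
  proof (intro set_eqI iffI)
    fix m assume "m \<in> loopmon B D2 lab2 w"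
    then obtain s where "s \<in> words B" "m = cls s" "cls s \<in> loopmon B D2 lab2 w" by (metis L2.loopmonE)
    then show "m \<in> H" using L2.loopmon_act_conj[OF w] closed_conj_iff[OF Hc HK KH p(1)] R2(5) by blast
  next
    fix m assume "m \<in> H"
    then obtain s where "s \<in> words B" "m = cls s" "cls s \<in> H" using closed_sub[OF Hc] by (metis McarE subsetD)
    then show "m \<in> loopmon B D2 lab2 w"
      using L2.loopmon_act_conj[OF w] closed_conj_iff[OF Hc HK KH p(1)] R2(5) by blast
  qed
  moreover have "w \<in> dcells D2 0" "f2 w = u" using L2.act_vertex[OF R2(3) w] M2.act_image[OF w] R2(4) p(2) by auto
  ultimately have rw: "realizes B C labC u H D2 lab2 f2 w" using r2 unfolding realizes_def by auto
  show ?thesis using realizations_isomorphic[OF base lC r1 rw] by blast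
qed

theorem realizations_iso_iff_conjugate:
  assumes "is_base B" and "labeled B C labC" and "closed_inv_submonoid B (Mcar B) H"
    and "realizes B C labC u H D1 lab1 f1 v1" and "realizes B C labC u K D2 lab2 f2 v2"
  shows "(\<exists>h. dc_iso D1 D2 h \<and> (\<forall>k. \<forall>c\<in>dcells D1 k. f2 (h c) = f1 c)) \<longleftrightarrow>
    conjugate B (loopmon B C labC u) H K"
  using conjugate_of_dc_iso[OF assms(1,2,4,5)] dc_iso_of_conjugate[OF assms] by blast

theorem mainTheorem13:
  fixes B :: "'l dcx" and C :: "'c dcx" and labC :: "'c \<Rightarrow> 'l"
  assumes "is_base B" and "labeled B C labC" and "dconnected C"
  shows
   "(\<forall>(D :: 'd dcx) labD f v.
       labeled B D labD \<and> dconnected D \<and> lab_immersion D labD C labC f \<and> v \<in> dcells D 0 \<longrightarrow>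
       loopmon B D labD v \<subseteq> loopmon B C labC (f v) \<and>
       closed_inv_submonoid B (loopmon B C labC (f v)) (loopmon B D labD v))
  \<and> (\<forall>u H. u \<in> dcells C 0 \<and> closed_inv_submonoid B (Mcar B) H \<and> H \<subseteq> loopmon B C labC u \<longrightarrow>
       (\<exists>(DH :: ('c \<times> 'l word set set) dcx) labH fH v.
          realizes B C labC u H DH labH fH v \<and>
          (\<forall>(D' :: 'd dcx) lab' f' v'. realizes B C labC u H D' lab' f' v' \<longrightarrow>
             (\<exists>h. dc_iso DH D' h \<and> h v = v' \<and>
                  (\<forall>k. \<forall>c\<in>dcells DH k. f' (h c) = fH c \<and> lab' (h c) = labH c)))))
  \<and> (\<forall>u H K (D1 :: 'd dcx) lab1 f1 v1 (D2 :: 'e dcx) lab2 f2 v2.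
       u \<in> dcells C 0 \<and>
       closed_inv_submonoid B (Mcar B) H \<and> H \<subseteq> loopmon B C labC u \<and>
       closed_inv_submonoid B (Mcar B) K \<and> K \<subseteq> loopmon B C labC u \<and>
       realizes B C labC u H D1 lab1 f1 v1 \<and> realizes B C labC u K D2 lab2 f2 v2 \<longrightarrow>
       ((\<exists>h. dc_iso D1 D2 h \<and> (\<forall>k. \<forall>c\<in>dcells D1 k. f2 (h c) = f1 c))
        \<longleftrightarrow> conjugate B (loopmon B C labC u) H K))"
  apply (intro conjI allI impI)
  subgoal for D labD f v using loopmon_immersion[OF assms(1,2), of D labD f v] by blast
  subgoal for D labD f v using loopmon_immersion[OF assms(1,2), of D labD f v] by blast
  subgoal using realization_exists_unique[OF assms(1,2)] by blast
  subgoal by (elim conjE) (rule realizations_iso_iff_conjugate[OF assms(1,2)]; assumption)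
  done

end
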